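(* Let $a\in[0,1)$, let $\{v_n\}_{n=1}^\infty\subset\mathbb{C}$ and $V=\mathrm{diag}(v_1,v_2,\dots)$. Let $K'$ be the semi-infinite matrix with entries $K'_{m,n}:=\sqrt{|v_m|}\big[\frac{a}{1-a}+\min(m,n)\big]\sqrt{|v_n|}$, $m,n\in\mathbb{N}$. If $K'$, regarded as an operator on $\ell^2(\mathbb{N})$, satisfies $\|K'\|\le1$, then $\sigma_{\mathrm d}(J_a+V)=\emptyset$. Equivalently (the two conditions being equivalent), if $|V|\le-\Delta_a$ in the sense of quadratic forms, then $\sigma_{\mathrm d}(J_a+V)=\emptyset$.
   Context: $\mathbb{N}=\{1,2,\dots\}$. For $a\in\mathbb{C}$, $J_a$ is the operator on $\ell^2(\mathbb{N})$ with $(J_a\psi)_1=a\psi_1+\psi_2$ and $(J_a\psi)_n=\psi_{n-1}+\psi_{n+1}$ for $n\ge2$; $-\Delta_a:=2-J_a$; $|V|=\mathrm{diag}(|v_1|,|v_2|,\dots)$. $\sigma_{\mathrm d}$ denotes the discrete spectrum (isolated eigenvalues of finite algebraic multiplicity). *)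

theory Defs
  imports "HOL-Analysis.Analysis"
begin

text \<open>Convention: the index set N = {1,2,...} of the paper is represented by the
  Isabelle type nat = {0,1,...} via the shift n \<mapsto> n+1; i.e. a sequence
  psi :: nat \<Rightarrow> complex stores psi_{n+1} at position n.\<close>

definition l2 :: "(nat \<Rightarrow> complex) \<Rightarrow> bool" where
  "l2 \<psi> \<longleftrightarrow> summable (\<lambda>n. (cmod (\<psi> n))\<^sup>2)"

definition l2norm :: "(nat \<Rightarrow> complex) \<Rightarrow> real" where
  "l2norm \<psi> = sqrt (\<Sum>n. (cmod (\<psi> n))\<^sup>2)"

definition l2inner :: "(nat \<Rightarrow> complex) \<Rightarrow> (nat \<Rightarrow> complex) \<Rightarrow> complex" where
  "l2inner \<phi> \<psi> = (\<Sum>n. cnj (\<phi> n) * \<psi> n)"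

definition Jop :: "complex \<Rightarrow> (nat \<Rightarrow> complex) \<Rightarrow> nat \<Rightarrow> complex" where
  "Jop a \<psi> n = (if n = 0 then a * \<psi> 0 + \<psi> 1 else \<psi> (n - 1) + \<psi> (n + 1))"

definition negLap :: "complex \<Rightarrow> (nat \<Rightarrow> complex) \<Rightarrow> nat \<Rightarrow> complex" where
  "negLap a \<psi> n = 2 * \<psi> n - Jop a \<psi> n"

definition Hdom :: "complex \<Rightarrow> (nat \<Rightarrow> complex) \<Rightarrow> (nat \<Rightarrow> complex) set" where
  "Hdom a v = {\<psi>. l2 \<psi> \<and> l2 (\<lambda>n. v n * \<psi> n)}"

definition Hop :: "complex \<Rightarrow> (nat \<Rightarrow> complex) \<Rightarrow> (nat \<Rightarrow> complex) \<Rightarrow> nat \<Rightarrow> complex" where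
  "Hop a v \<psi> n = Jop a \<psi> n + v n * \<psi> n"

definition resolvent_set :: "complex \<Rightarrow> (nat \<Rightarrow> complex) \<Rightarrow> complex set" where
  "resolvent_set a v = {z. (\<forall>f. l2 f \<longrightarrow> (\<exists>!\<psi>. \<psi> \<in> Hdom a v \<and> (\<lambda>n. Hop a v \<psi> n - z * \<psi> n) = f))
      \<and> (\<exists>C. \<forall>\<psi>\<in>Hdom a v. l2norm \<psi> \<le> C * l2norm (\<lambda>n. Hop a v \<psi> n - z * \<psi> n))}"

definition spectrum_H :: "complex \<Rightarrow> (nat \<Rightarrow> complex) \<Rightarrow> complex set" where
  "spectrum_H a v = - resolvent_set a v"

definition is_eigenvalue :: "complex \<Rightarrow> (nat \<Rightarrow> complex) \<Rightarrow> complex \<Rightarrow> bool" where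
  "is_eigenvalue a v z \<longleftrightarrow> (\<exists>\<psi>\<in>Hdom a v. \<psi> \<noteq> (\<lambda>_. 0) \<and> Hop a v \<psi> = (\<lambda>n. z * \<psi> n))"

text \<open>gen_ker a v z k psi: psi \<in> ker (H - z)^k (with domains of the iterates respected).\<close>
fun gen_ker :: "complex \<Rightarrow> (nat \<Rightarrow> complex) \<Rightarrow> complex \<Rightarrow> nat \<Rightarrow> (nat \<Rightarrow> complex) \<Rightarrow> bool" where
  "gen_ker a v z 0 \<psi> = (\<psi> = (\<lambda>_. 0))"
| "gen_ker a v z (Suc k) \<psi> = (\<psi> \<in> Hdom a v \<and> gen_ker a v z k (\<lambda>n. Hop a v \<psi> n - z * \<psi> n))"

text \<open>Finite algebraic multiplicity: the generalized eigenspace (union over k of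
  ker (H - z)^k) is finite-dimensional, i.e. spanned by a finite set.\<close>
definition finite_alg_mult :: "complex \<Rightarrow> (nat \<Rightarrow> complex) \<Rightarrow> complex \<Rightarrow> bool" where
  "finite_alg_mult a v z \<longleftrightarrow> (\<exists>B. finite B \<and>
     (\<forall>\<psi>. (\<exists>k. gen_ker a v z k \<psi>) \<longrightarrow> (\<exists>c. \<psi> = (\<lambda>n. \<Sum>b\<in>B. c b * b n))))"

definition discrete_spectrum :: "complex \<Rightarrow> (nat \<Rightarrow> complex) \<Rightarrow> complex set" where
  "discrete_spectrum a v = {z. z \<in> spectrum_H a v \<and> \<not> z islimpt spectrum_H a v
      \<and> is_eigenvalue a v z \<and> finite_alg_mult a v z}"

text \<open>The matrix K' (0-based): K'_{m,n} = sqrt|v_m| (a/(1-a) + min(m,n)) sqrt|v_n|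
  in 1-based indices, i.e. min m n + 1 in 0-based indices.\<close>
definition Kmat :: "real \<Rightarrow> (nat \<Rightarrow> complex) \<Rightarrow> nat \<Rightarrow> nat \<Rightarrow> complex" where
  "Kmat a v m n = complex_of_real
     (sqrt (cmod (v m)) * (a / (1 - a) + real (min m n + 1)) * sqrt (cmod (v n)))"

definition matrix_op_norm_le :: "(nat \<Rightarrow> nat \<Rightarrow> complex) \<Rightarrow> real \<Rightarrow> bool" where
  "matrix_op_norm_le M c \<longleftrightarrow> (\<forall>\<psi>. l2 \<psi> \<longrightarrow>
     (\<forall>m. summable (\<lambda>n. M m n * \<psi> n)) \<and>
     l2 (\<lambda>m. \<Sum>n. M m n * \<psi> n) \<and>
     l2norm (\<lambda>m. \<Sum>n. M m n * \<psi> n) \<le> c * l2norm \<psi>)"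

definition absV_le_negLap :: "complex \<Rightarrow> (nat \<Rightarrow> complex) \<Rightarrow> bool" where
  "absV_le_negLap a v \<longleftrightarrow> (\<forall>\<psi>. l2 \<psi> \<longrightarrow>
     summable (\<lambda>n. cmod (v n) * (cmod (\<psi> n))\<^sup>2) \<and>
     (\<Sum>n. cmod (v n) * (cmod (\<psi> n))\<^sup>2) \<le> Re (l2inner \<psi> (negLap a \<psi>)))"

end

theory Submission
  imports Defs
begin

text \<open>In 0-based indices \<open>-\<Delta>\<^sub>a\<close> has the inverse kernel \<open>G(m,n) = 1/(1-a) + min m n\<close>, so
  \<open>K' = |V|\<^sup>1\<^sup>/\<^sup>2 G |V|\<^sup>1\<^sup>/\<^sup>2\<close>, and \<open>\<parallel>K'\<parallel> \<le> 1\<close> is equivalent to \<open>|V| \<le> G\<inverse> = -\<Delta>\<^sub>a\<close>. Both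
  directions are checked on finitely supported vectors: summation by parts gives
  \<open>2\<langle>g,p\<rangle> \<le> \<langle>p,-\<Delta>\<^sub>a p\<rangle> + \<langle>g,G g\<rangle>\<close>, and conversely \<open>G g\<close>, cut off linearly far out,
  is a test vector for the form inequality.

  Testing \<open>|V| \<le> -\<Delta>\<^sub>a\<close> on indicators of \<open>{..N}\<close> gives \<open>\<Sum>|v\<^sub>n| < \<infinity>\<close>, so plane waves
  truncated to windows far out are Weyl sequences and every point of \<open>[-2,2]\<close> is a
  non-isolated point of the spectrum. For \<open>z = k + 1/k\<close> with \<open>0 < |k| < 1\<close>, variation of
  constants bounds the resolvent kernel of \<open>J\<^sub>a\<close> by \<open>G\<close>, strictly on the diagonal. An
  eigenvector \<open>\<psi> = -(J\<^sub>a - z)\<inverse> V \<psi>\<close> then gives \<open>u = |V|\<^sup>1\<^sup>/\<^sup>2 |\<psi>|\<close> with \<open>u \<le> K' u\<close>,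
  strictly wherever \<open>V \<psi> \<noteq> 0\<close>; since \<open>\<parallel>K'\<parallel> \<le> 1\<close> this forces \<open>V \<psi> = 0\<close>, hence \<open>\<psi> = 0\<close>.\<close>

lemma summable_mult_of_summable_squares:
  fixes x y :: "nat \<Rightarrow> real"
  assumes "summable (\<lambda>n. (x n)\<^sup>2)" "summable (\<lambda>n. (y n)\<^sup>2)"
  shows "summable (\<lambda>n. \<bar>x n\<bar> * \<bar>y n\<bar>)" "summable (\<lambda>n. x n * y n)"
proof -
  have b: "norm (\<bar>x n\<bar> * \<bar>y n\<bar>) \<le> ((x n)\<^sup>2 + (y n)\<^sup>2) / 2" for n
    using sum_squares_bound[of "\<bar>x n\<bar>" "\<bar>y n\<bar>"] by (simp add: abs_mult)
  have s: "summable (\<lambda>n. ((x n)\<^sup>2 + (y n)\<^sup>2) / 2)"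
    using assms by (intro summable_divide summable_add)
  show "summable (\<lambda>n. \<bar>x n\<bar> * \<bar>y n\<bar>)"
    by (rule summable_comparison_test'[OF s b])
  show "summable (\<lambda>n. x n * y n)"
    by (rule summable_comparison_test'[OF s]) (use b in \<open>simp add: abs_mult\<close>)
qed

lemma Cauchy_Schwarz_suminf:
  fixes x y :: "nat \<Rightarrow> real"
  assumes x: "summable (\<lambda>n. (x n)\<^sup>2)" and y: "summable (\<lambda>n. (y n)\<^sup>2)"
  shows "\<bar>\<Sum>n. x n * y n\<bar> \<le> sqrt (\<Sum>n. (x n)\<^sup>2) * sqrt (\<Sum>n. (y n)\<^sup>2)"
proof -
  note s = summable_mult_of_summable_squares[OF x y]
  have "(\<Sum>n. \<bar>x n\<bar> * \<bar>y n\<bar>) \<le> sqrt (\<Sum>n. (x n)\<^sup>2) * sqrt (\<Sum>n. (y n)\<^sup>2)"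
  proof (rule suminf_le_const[OF s(1)])
    fix N
    have "(\<Sum>n<N. \<bar>x n\<bar> * \<bar>y n\<bar>) \<le> L2_set x {..<N} * L2_set y {..<N}"
      by (rule L2_set_mult_ineq)
    also have "\<dots> \<le> sqrt (\<Sum>n. (x n)\<^sup>2) * sqrt (\<Sum>n. (y n)\<^sup>2)"
      unfolding L2_set_def using x y
      by (intro mult_mono real_sqrt_le_mono sum_le_suminf) (auto simp: sum_nonneg intro: suminf_nonneg)
    finally show "(\<Sum>n<N. \<bar>x n\<bar> * \<bar>y n\<bar>) \<le> sqrt (\<Sum>n. (x n)\<^sup>2) * sqrt (\<Sum>n. (y n)\<^sup>2)" .
  qed
  moreover have "\<bar>\<Sum>n. x n * y n\<bar> \<le> (\<Sum>n. \<bar>x n\<bar> * \<bar>y n\<bar>)"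
    using summable_rabs[of "\<lambda>n. x n * y n"] s(1) by (simp add: abs_mult)
  ultimately show ?thesis by linarith
qed

lemma summable_of_bounded_partial_sums:
  fixes f :: "nat \<Rightarrow> real"
  assumes nonneg: "\<And>n. 0 \<le> f n" and bound: "\<And>N. (\<Sum>n\<le>N. f n) \<le> B"
  shows "summable f" "suminf f \<le> B"
proof -
  have partial: "sum f {..<k} \<le> B" for k
  proof (cases k)
    case 0
    then show ?thesis using bound[of 0] nonneg[of 0] by simp
  next
    case (Suc N)
    then show ?thesis using bound[of N] by (simp add: lessThan_Suc_atMost)
  qed
  show s: "summable f" by (rule summableI_nonneg_bounded[OF nonneg partial])
  show "suminf f \<le> B" by (rule suminf_le_const[OF s partial])
qed

lemma l2_tendsto_zero:
  assumes "l2 \<psi>" shows "\<psi> \<longlonglongrightarrow> 0"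
proof -
  have "(\<lambda>n. (cmod (\<psi> n))\<^sup>2) \<longlonglongrightarrow> 0"
    using assms unfolding l2_def by (rule summable_LIMSEQ_zero)
  then have "(\<lambda>n. sqrt ((cmod (\<psi> n))\<^sup>2)) \<longlonglongrightarrow> sqrt 0"
    by (intro tendsto_real_sqrt)
  then show ?thesis by (simp add: tendsto_norm_zero_iff)
qed

lemma l2_finite_support:
  assumes "\<And>n. M \<le> n \<Longrightarrow> f n = 0"
  shows "l2 f" "l2norm f = sqrt (\<Sum>n<M. (cmod (f n))\<^sup>2)"
proof -
  have z: "n \<notin> {..<M} \<Longrightarrow> (cmod (f n))\<^sup>2 = 0" for n using assms by simp
  show "l2 f" unfolding l2_def by (rule summable_finite[of "{..<M}"]) (use z in auto)
  show "l2norm f = sqrt (\<Sum>n<M. (cmod (f n))\<^sup>2)"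
    unfolding l2norm_def by (subst suminf_finite[of "{..<M}"]) (use z in auto)
qed

lemma l2_of_real: "l2 (\<lambda>n. complex_of_real (x n)) \<longleftrightarrow> summable (\<lambda>n. (x n)\<^sup>2)"
  by (simp add: l2_def)

lemma l2norm_of_real: "l2norm (\<lambda>n. complex_of_real (x n)) = sqrt (\<Sum>n. (x n)\<^sup>2)"
  by (simp add: l2norm_def)

section \<open>The quadratic form of \<open>-\<Delta>\<^sub>a\<close>\<close>

definition negLap_form :: "real \<Rightarrow> (nat \<Rightarrow> complex) \<Rightarrow> real" where
  "negLap_form a \<psi> = (1 - a) * (cmod (\<psi> 0))\<^sup>2 + (\<Sum>n. (cmod (\<psi> n - \<psi> (Suc n)))\<^sup>2)"

lemma norm_negLap_le:
  "cmod (negLap (complex_of_real a) \<psi> n)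
     \<le> (2 + \<bar>a\<bar>) * cmod (\<psi> n) + cmod (\<psi> (n - 1)) + cmod (\<psi> (Suc n))"
proof (cases "n = 0")
  case True
  then show ?thesis unfolding negLap_def Jop_def
    using norm_triangle_ineq4[of "2 * \<psi> 0" "complex_of_real a * \<psi> 0 + \<psi> 1"]
          norm_triangle_ineq[of "complex_of_real a * \<psi> 0" "\<psi> 1"] norm_ge_zero[of "\<psi> 0"]
    by (simp add: norm_mult algebra_simps, linarith)
next
  case False
  then show ?thesis unfolding negLap_def Jop_def
    using norm_triangle_ineq4[of "2 * \<psi> n" "\<psi> (n - 1) + \<psi> (n + 1)"]
          norm_triangle_ineq[of "\<psi> (n - 1)" "\<psi> (n + 1)"]
          mult_nonneg_nonneg[OF abs_ge_zero[of a] norm_ge_zero[of "\<psi> n"]]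
    by (simp add: norm_mult algebra_simps, linarith)
qed

lemma summable_inner_negLap:
  assumes "l2 \<psi>"
  shows "summable (\<lambda>n. cnj (\<psi> n) * negLap (complex_of_real a) \<psi> n)"
proof -
  let ?p = "\<lambda>n. cmod (\<psi> n)"
  have s0: "summable (\<lambda>n. (?p n)\<^sup>2)" using assms by (simp add: l2_def)
  have s1: "summable (\<lambda>n. (?p (n - 1))\<^sup>2)"
    using s0 summable_Suc_iff[of "\<lambda>n. (?p (n - 1))\<^sup>2"] by simp
  have s2: "summable (\<lambda>n. (?p (Suc n))\<^sup>2)"
    using s0 summable_Suc_iff[of "\<lambda>n. (?p n)\<^sup>2"] by simp
  have g: "summable (\<lambda>n. (2 + \<bar>a\<bar>) * (?p n)\<^sup>2 + \<bar>?p n\<bar> * \<bar>?p (n - 1)\<bar> + \<bar>?p n\<bar> * \<bar>?p (Suc n)\<bar>)"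
    by (intro summable_add summable_mult s0 summable_mult_of_summable_squares(1) s1 s2)
  show ?thesis
  proof (rule summable_comparison_test'[OF g])
    fix n
    have "cmod (cnj (\<psi> n) * negLap (complex_of_real a) \<psi> n)
        \<le> ?p n * ((2 + \<bar>a\<bar>) * ?p n + ?p (n - 1) + ?p (Suc n))"
      unfolding norm_mult complex_mod_cnj by (intro mult_left_mono norm_negLap_le) auto
    then show "norm (cnj (\<psi> n) * negLap (complex_of_real a) \<psi> n)
        \<le> (2 + \<bar>a\<bar>) * (?p n)\<^sup>2 + \<bar>?p n\<bar> * \<bar>?p (n - 1)\<bar> + \<bar>?p n\<bar> * \<bar>?p (Suc n)\<bar>"
      by (simp add: power2_eq_square algebra_simps)
  qed
qed

lemma Re_sum_inner_negLap:
  "Re (\<Sum>n<Suc N. cnj (\<psi> n) * negLap (complex_of_real a) \<psi> n)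
   = (1 - a) * (cmod (\<psi> 0))\<^sup>2 + (\<Sum>n<N. (cmod (\<psi> n - \<psi> (Suc n)))\<^sup>2)
     + (cmod (\<psi> N))\<^sup>2 - Re (cnj (\<psi> N) * \<psi> (Suc N))"
proof -
  have sq: "cmod z * cmod z = Re z * Re z + Im z * Im z" for z
    using cmod_power2[of z] by (simp add: power2_eq_square)
  show ?thesis
  proof (induction N)
    case 0
    show ?case by (simp add: negLap_def Jop_def cmod_power2 power2_eq_square sq algebra_simps)
  next
    case (Suc N)
    then show ?case by (simp add: negLap_def Jop_def cmod_power2 power2_eq_square sq algebra_simps)
  qed
qed

lemma summable_norm_diff_sq:
  assumes "l2 \<psi>"
  shows "summable (\<lambda>n. (cmod (\<psi> n - \<psi> (Suc n)))\<^sup>2)"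
proof -
  have s0: "summable (\<lambda>n. (cmod (\<psi> n))\<^sup>2)" using assms by (simp add: l2_def)
  have g: "summable (\<lambda>n. 2 * (cmod (\<psi> n))\<^sup>2 + 2 * (cmod (\<psi> (Suc n)))\<^sup>2)"
    using s0 summable_Suc_iff[of "\<lambda>n. (cmod (\<psi> n))\<^sup>2"] by (intro summable_add summable_mult) simp_all
  show ?thesis
  proof (rule summable_comparison_test'[OF g])
    fix n
    have "(cmod (\<psi> n - \<psi> (Suc n)))\<^sup>2 \<le> (cmod (\<psi> n) + cmod (\<psi> (Suc n)))\<^sup>2"
      by (intro power_mono norm_triangle_ineq4) auto
    also have "\<dots> \<le> 2 * (cmod (\<psi> n))\<^sup>2 + 2 * (cmod (\<psi> (Suc n)))\<^sup>2"
      using sum_squares_bound[of "cmod (\<psi> n)" "cmod (\<psi> (Suc n))"] by (simp add: power2_sum)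
    finally show "norm ((cmod (\<psi> n - \<psi> (Suc n)))\<^sup>2) \<le> 2 * (cmod (\<psi> n))\<^sup>2 + 2 * (cmod (\<psi> (Suc n)))\<^sup>2"
      by simp
  qed
qed

lemma Re_l2inner_negLap:
  assumes "l2 \<psi>"
  shows "Re (l2inner \<psi> (negLap (complex_of_real a) \<psi>)) = negLap_form a \<psi>"
proof -
  let ?f = "\<lambda>n. cnj (\<psi> n) * negLap (complex_of_real a) \<psi> n"
  have sd: "summable (\<lambda>n. (cmod (\<psi> n - \<psi> (Suc n)))\<^sup>2)" by (rule summable_norm_diff_sq[OF assms])
  have t0: "\<psi> \<longlonglongrightarrow> 0" by (rule l2_tendsto_zero[OF assms])
  have "(\<lambda>N. Re (\<Sum>n<Suc N. ?f n)) \<longlonglongrightarrow> Re (suminf ?f)"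
    using summable_LIMSEQ[OF summable_inner_negLap[OF assms]] by (intro tendsto_Re LIMSEQ_Suc)
  moreover have "(\<lambda>N. Re (\<Sum>n<Suc N. ?f n)) \<longlonglongrightarrow>
     (1 - a) * (cmod (\<psi> 0))\<^sup>2 + (\<Sum>n. (cmod (\<psi> n - \<psi> (Suc n)))\<^sup>2) + (cmod 0)\<^sup>2 - Re (cnj 0 * 0)"
    unfolding Re_sum_inner_negLap using t0
    by (intro tendsto_intros summable_LIMSEQ[OF sd]) (auto intro: tendsto_intros LIMSEQ_Suc)
  ultimately have "Re (suminf ?f) = (1 - a) * (cmod (\<psi> 0))\<^sup>2 + (\<Sum>n. (cmod (\<psi> n - \<psi> (Suc n)))\<^sup>2)"
    by (simp add: LIMSEQ_unique)
  then show ?thesis by (simp add: l2inner_def negLap_form_def)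
qed

lemma absV_le_negLap_partial:
  assumes "absV_le_negLap (complex_of_real a) v" and "l2 \<psi>"
  shows "(\<Sum>n<M. cmod (v n) * (cmod (\<psi> n))\<^sup>2) \<le> negLap_form a \<psi>"
proof -
  have s: "summable (\<lambda>n. cmod (v n) * (cmod (\<psi> n))\<^sup>2)"
    and b: "(\<Sum>n. cmod (v n) * (cmod (\<psi> n))\<^sup>2) \<le> negLap_form a \<psi>"
    using assms Re_l2inner_negLap[OF assms(2)] unfolding absV_le_negLap_def by auto
  have "(\<Sum>n<M. cmod (v n) * (cmod (\<psi> n))\<^sup>2) \<le> (\<Sum>n. cmod (v n) * (cmod (\<psi> n))\<^sup>2)"
    by (rule sum_le_suminf[OF s]) auto
  with b show ?thesis by linarith
qed

lemma absV_le_negLapI: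
  assumes "\<And>\<psi> N. l2 \<psi> \<Longrightarrow> (\<Sum>n\<le>N. cmod (v n) * (cmod (\<psi> n))\<^sup>2) \<le> negLap_form a \<psi>"
  shows "absV_le_negLap (complex_of_real a) v"
  unfolding absV_le_negLap_def
proof (intro allI impI)
  fix \<psi> assume l: "l2 \<psi>"
  note bounded = summable_of_bounded_partial_sums[of "\<lambda>n. cmod (v n) * (cmod (\<psi> n))\<^sup>2", OF _ assms[OF l]]
  then show "summable (\<lambda>n. cmod (v n) * (cmod (\<psi> n))\<^sup>2)
      \<and> (\<Sum>n. cmod (v n) * (cmod (\<psi> n))\<^sup>2) \<le> Re (l2inner \<psi> (negLap (complex_of_real a) \<psi>))"
    unfolding Re_l2inner_negLap[OF l] by simp
qed

section \<open>The Green kernel of \<open>-\<Delta>\<^sub>a\<close>\<close>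

text \<open>\<open>green a\<close> is the kernel of \<open>(-\<Delta>\<^sub>a)\<inverse>\<close>; by \<open>Kmat_eq_Kreal\<close>,
  \<open>Kmat a v = |V|\<^sup>1\<^sup>/\<^sup>2 (-\<Delta>\<^sub>a)\<inverse> |V|\<^sup>1\<^sup>/\<^sup>2\<close>.\<close>
definition green :: "real \<Rightarrow> nat \<Rightarrow> nat \<Rightarrow> real" where
  "green a m n = 1 / (1 - a) + real (min m n)"

definition sqrtV :: "(nat \<Rightarrow> complex) \<Rightarrow> nat \<Rightarrow> real" where
  "sqrtV v n = sqrt (cmod (v n))"

definition Kreal :: "real \<Rightarrow> (nat \<Rightarrow> complex) \<Rightarrow> nat \<Rightarrow> nat \<Rightarrow> real" where
  "Kreal a v m n = sqrtV v m * green a m n * sqrtV v n"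

definition green_apply :: "real \<Rightarrow> nat \<Rightarrow> (nat \<Rightarrow> real) \<Rightarrow> nat \<Rightarrow> real" where
  "green_apply a N g m = (\<Sum>n\<le>N. green a m n * g n)"

lemma sqrtV_nonneg: "0 \<le> sqrtV v n"
  by (simp add: sqrtV_def)

lemma sqrtV_sq: "(sqrtV v n)\<^sup>2 = cmod (v n)" "sqrtV v n * sqrtV v n = cmod (v n)"
  by (simp_all add: sqrtV_def)

lemma Kmat_eq_Kreal:
  assumes "a < 1" shows "Kmat a v m n = complex_of_real (Kreal a v m n)"
proof -
  have "a / (1 - a) + real (min m n + 1) = green a m n"
    using assms by (simp add: green_def field_simps)
  then show ?thesis unfolding Kmat_def Kreal_def sqrtV_def by (simp only:)
qed

lemma Kreal_sym: "Kreal a v m n = Kreal a v n m"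
  by (simp add: Kreal_def green_def min.commute mult.commute mult.left_commute)

lemma Kreal_sum_eq_green_apply:
  "(\<Sum>n\<le>N. Kreal a v m n * \<phi> n) = sqrtV v m * green_apply a N (\<lambda>n. sqrtV v n * \<phi> n) m"
  unfolding Kreal_def green_apply_def sum_distrib_left by (rule sum.cong) (simp_all add: algebra_simps)

lemma green_apply_0: "green_apply a N g 0 = (\<Sum>n\<le>N. g n) / (1 - a)"
  by (simp add: green_apply_def green_def sum_divide_distrib)

lemma green_apply_Suc:
  "green_apply a N g (Suc m) - green_apply a N g m = (\<Sum>n = Suc m..N. g n)"
proof -
  have "green_apply a N g (Suc m) - green_apply a N g m = (\<Sum>n\<le>N. if m < n then g n else 0)"
    unfolding green_apply_def sum_subtractf[symmetric]
    by (rule sum.cong) (auto simp: green_def min_def algebra_simps)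
  also have "\<dots> = (\<Sum>n\<in>{n \<in> {..N}. m < n}. g n)"
    by (rule sum.inter_filter[symmetric]) simp
  also have "{n \<in> {..N}. m < n} = {Suc m..N}" by auto
  finally show ?thesis .
qed

lemma green_apply_eq_tail_sums:
  "green_apply a N g m = (\<Sum>n\<le>N. g n) / (1 - a) + (\<Sum>k<m. \<Sum>n = Suc k..N. g n)"
proof (induction m)
  case 0
  then show ?case by (simp add: green_apply_0)
next
  case (Suc m)
  then show ?case using green_apply_Suc[of a N g m] by simp
qed

lemma green_apply_const: "N \<le> m \<Longrightarrow> green_apply a N g m = green_apply a N g N"
  unfolding green_apply_eq_tail_sums
  by (induction m rule: dec_induct) auto

lemma sum_mult_green_apply:
  "(\<Sum>m\<le>N. g m * green_apply a N g m)
     = (\<Sum>n\<le>N. g n)\<^sup>2 / (1 - a) + (\<Sum>k<N. (\<Sum>n = Suc k..N. g n)\<^sup>2)"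
proof -
  let ?S = "\<Sum>n\<le>N. g n" and ?T = "\<lambda>k. \<Sum>n = Suc k..N. g n"
  have "(\<Sum>m\<le>N. g m * green_apply a N g m)
      = (\<Sum>m\<le>N. g m * ?S / (1 - a) + (\<Sum>k<m. g m * ?T k))"
    unfolding green_apply_eq_tail_sums by (simp add: algebra_simps sum_distrib_left)
  also have "\<dots> = ?S * ?S / (1 - a) + (\<Sum>m\<le>N. \<Sum>k<m. g m * ?T k)"
    by (simp add: sum.distrib sum_divide_distrib[symmetric] sum_distrib_right)
  also have "(\<Sum>m\<le>N. \<Sum>k<m. g m * ?T k) = (\<Sum>k<N. \<Sum>m = Suc k..N. g m * ?T k)"
    by (rule sum.nested_swap')
  also have "\<dots> = (\<Sum>k<N. (?T k)\<^sup>2)"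
    by (simp add: sum_distrib_right power2_eq_square)
  finally show ?thesis by (simp add: power2_eq_square)
qed

lemma sum_mult_by_parts:
  fixes g p :: "nat \<Rightarrow> 'a :: comm_ring"
  shows "(\<Sum>n\<le>N. g n * p n)
     = p 0 * (\<Sum>n\<le>N. g n) - (\<Sum>k<N. (p k - p (Suc k)) * (\<Sum>n = Suc k..N. g n))"
proof -
  have p: "p n = p 0 - (\<Sum>k<n. p k - p (Suc k))" for n
    by (simp add: sum_lessThan_telescope')
  have "(\<Sum>n\<le>N. g n * p n) = (\<Sum>n\<le>N. p 0 * g n - (\<Sum>k<n. (p k - p (Suc k)) * g n))"
    by (subst p) (simp add: algebra_simps sum_distrib_left sum_distrib_right)
  also have "\<dots> = p 0 * (\<Sum>n\<le>N. g n) - (\<Sum>n\<le>N. \<Sum>k<n. (p k - p (Suc k)) * g n)"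
    by (simp add: sum_subtractf sum_distrib_left)
  also have "(\<Sum>n\<le>N. \<Sum>k<n. (p k - p (Suc k)) * g n) = (\<Sum>k<N. \<Sum>n = Suc k..N. (p k - p (Suc k)) * g n)"
    by (rule sum.nested_swap')
  finally show ?thesis by (simp add: sum_distrib_left)
qed

lemma two_sum_mult_le_form_plus_green:
  fixes g p :: "nat \<Rightarrow> real"
  assumes a1: "a < 1"
  shows "2 * (\<Sum>n\<le>N. g n * p n)
     \<le> (1 - a) * (p 0)\<^sup>2 + (\<Sum>k<N. (p k - p (Suc k))\<^sup>2) + (\<Sum>m\<le>N. g m * green_apply a N g m)"
proof -
  let ?S = "\<Sum>n\<le>N. g n" and ?T = "\<lambda>k. \<Sum>n = Suc k..N. g n" and ?\<beta> = "\<lambda>k. p k - p (Suc k)"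
  have head: "2 * (p 0 * ?S) \<le> (1 - a) * (p 0)\<^sup>2 + ?S\<^sup>2 / (1 - a)"
  proof -
    define d where "d = 1 - a"
    have d: "0 < d" using a1 by (simp add: d_def)
    have "0 \<le> d * (p 0 - ?S / d)\<^sup>2" using d by simp
    also have "\<dots> = d * (p 0)\<^sup>2 - 2 * (p 0 * ?S) + ?S\<^sup>2 / d"
      using d by (simp add: power2_eq_square field_simps)
    finally show ?thesis by (simp add: d_def)
  qed
  have tail: "(\<Sum>k<N. - (2 * (?\<beta> k * ?T k))) \<le> (\<Sum>k<N. (?\<beta> k)\<^sup>2 + (?T k)\<^sup>2)"
  proof (rule sum_mono)
    fix k
    show "- (2 * (?\<beta> k * ?T k)) \<le> (?\<beta> k)\<^sup>2 + (?T k)\<^sup>2"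
      using zero_le_power2[of "?\<beta> k + ?T k"] by (simp add: power2_eq_square algebra_simps)
  qed
  have "2 * (\<Sum>n\<le>N. g n * p n) = 2 * (p 0 * ?S) + (\<Sum>k<N. - (2 * (?\<beta> k * ?T k)))"
    by (simp add: sum_mult_by_parts[of g p] sum_negf sum_distrib_left)
  also have "\<dots> \<le> (1 - a) * (p 0)\<^sup>2 + ?S\<^sup>2 / (1 - a) + (\<Sum>k<N. (?\<beta> k)\<^sup>2 + (?T k)\<^sup>2)"
    using head tail by linarith
  finally show ?thesis unfolding sum_mult_green_apply sum.distrib by simp
qed

section \<open>The bound on \<open>K'\<close> implies the form bound\<close>

definition real_matrix_contraction :: "(nat \<Rightarrow> nat \<Rightarrow> real) \<Rightarrow> bool" where
  "real_matrix_contraction M \<longleftrightarrow> (\<forall>x. summable (\<lambda>n. (x n)\<^sup>2) \<longrightarrow>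
     (\<forall>m. summable (\<lambda>n. M m n * x n)) \<and>
     summable (\<lambda>m. (\<Sum>n. M m n * x n)\<^sup>2) \<and>
     (\<Sum>m. (\<Sum>n. M m n * x n)\<^sup>2) \<le> (\<Sum>n. (x n)\<^sup>2))"

lemma matrix_op_norm_le_imp_real_contraction:
  assumes "matrix_op_norm_le (\<lambda>m n. complex_of_real (M m n)) 1"
  shows "real_matrix_contraction M"
  unfolding real_matrix_contraction_def
proof (intro allI impI)
  fix x :: "nat \<Rightarrow> real" assume sx: "summable (\<lambda>n. (x n)\<^sup>2)"
  let ?\<psi> = "\<lambda>n. complex_of_real (x n)"
  have l: "l2 ?\<psi>" using sx by (simp add: l2_of_real)
  have eq: "complex_of_real (M m n) * ?\<psi> n = complex_of_real (M m n * x n)" for m n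
    by simp
  from assms l have r: "\<forall>m. summable (\<lambda>n. complex_of_real (M m n) * ?\<psi> n)"
    and l2y: "l2 (\<lambda>m. \<Sum>n. complex_of_real (M m n) * ?\<psi> n)"
    and nm: "l2norm (\<lambda>m. \<Sum>n. complex_of_real (M m n) * ?\<psi> n) \<le> 1 * l2norm ?\<psi>"
    unfolding matrix_op_norm_le_def by blast+
  have rs: "\<forall>m. summable (\<lambda>n. M m n * x n)"
    using r unfolding eq summable_complex_of_real .
  have ye: "(\<Sum>n. complex_of_real (M m n) * ?\<psi> n) = complex_of_real (\<Sum>n. M m n * x n)" for m
    unfolding eq by (rule suminf_of_real[symmetric]) (use rs in blast)
  have "sqrt (\<Sum>m. (\<Sum>n. M m n * x n)\<^sup>2) \<le> sqrt (\<Sum>n. (x n)\<^sup>2)"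
    using nm unfolding ye l2norm_of_real by simp
  then show "(\<forall>m. summable (\<lambda>n. M m n * x n)) \<and> summable (\<lambda>m. (\<Sum>n. M m n * x n)\<^sup>2)
      \<and> (\<Sum>m. (\<Sum>n. M m n * x n)\<^sup>2) \<le> (\<Sum>n. (x n)\<^sup>2)"
    using rs l2y unfolding ye l2_of_real by simp
qed

lemma real_contraction_imp_matrix_op_norm_le:
  assumes M: "real_matrix_contraction M"
  shows "matrix_op_norm_le (\<lambda>m n. complex_of_real (M m n)) 1"
  unfolding matrix_op_norm_le_def
proof (intro allI impI)
  fix \<psi> assume l: "l2 \<psi>"
  define x where "x n = Re (\<psi> n)" for n
  define y where "y n = Im (\<psi> n)" for n
  have sp: "summable (\<lambda>n. (cmod (\<psi> n))\<^sup>2)" using l by (simp add: l2_def)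
  have cm: "(cmod (\<psi> n))\<^sup>2 = (x n)\<^sup>2 + (y n)\<^sup>2" for n by (simp add: x_def y_def cmod_power2)
  have sx: "summable (\<lambda>n. (x n)\<^sup>2)" and sy: "summable (\<lambda>n. (y n)\<^sup>2)"
    by (rule summable_comparison_test'[OF sp], simp add: cm)+
  define p where "p m = (\<Sum>n. M m n * x n)" for m
  define q where "q m = (\<Sum>n. M m n * y n)" for m
  from M sx have R: "\<forall>m. summable (\<lambda>n. M m n * x n)" "summable (\<lambda>m. (p m)\<^sup>2)"
    "(\<Sum>m. (p m)\<^sup>2) \<le> (\<Sum>n. (x n)\<^sup>2)"
    unfolding real_matrix_contraction_def p_def by blast+
  from M sy have I: "\<forall>m. summable (\<lambda>n. M m n * y n)" "summable (\<lambda>m. (q m)\<^sup>2)"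
    "(\<Sum>m. (q m)\<^sup>2) \<le> (\<Sum>n. (y n)\<^sup>2)"
    unfolding real_matrix_contraction_def q_def by blast+
  have sums: "(\<lambda>n. complex_of_real (M m n) * \<psi> n) sums Complex (p m) (q m)" for m
    unfolding sums_complex_iff using R(1) I(1) by (simp add: p_def q_def x_def y_def summable_sums)
  have se: "(\<Sum>n. complex_of_real (M m n) * \<psi> n) = Complex (p m) (q m)" for m
    using sums[of m] by (rule sums_unique[symmetric])
  have cq: "(cmod (Complex (p m) (q m)))\<^sup>2 = (p m)\<^sup>2 + (q m)\<^sup>2" for m
    by (simp add: cmod_power2)
  have "(\<Sum>m. (p m)\<^sup>2 + (q m)\<^sup>2) = (\<Sum>m. (p m)\<^sup>2) + (\<Sum>m. (q m)\<^sup>2)"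
    using R(2) I(2) by (rule suminf_add[symmetric])
  also have "\<dots> \<le> (\<Sum>n. (x n)\<^sup>2) + (\<Sum>n. (y n)\<^sup>2)"
    using R(3) I(3) by simp
  also have "\<dots> = (\<Sum>n. (cmod (\<psi> n))\<^sup>2)"
    unfolding cm using sx sy by (rule suminf_add)
  finally have "l2norm (\<lambda>m. \<Sum>n. complex_of_real (M m n) * \<psi> n) \<le> 1 * l2norm \<psi>"
    unfolding l2norm_def se cq by simp
  moreover have "l2 (\<lambda>m. \<Sum>n. complex_of_real (M m n) * \<psi> n)"
    unfolding l2_def se cq using R(2) I(2) by (rule summable_add)
  ultimately show "(\<forall>m. summable (\<lambda>n. complex_of_real (M m n) * \<psi> n))
      \<and> l2 (\<lambda>m. \<Sum>n. complex_of_real (M m n) * \<psi> n)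
      \<and> l2norm (\<lambda>m. \<Sum>n. complex_of_real (M m n) * \<psi> n) \<le> 1 * l2norm \<psi>"
    using sums sums_summable by blast
qed

lemma Kmat_op_norm_le_iff:
  assumes "a < 1"
  shows "matrix_op_norm_le (Kmat a v) 1 \<longleftrightarrow> real_matrix_contraction (Kreal a v)"
proof -
  have "Kmat a v = (\<lambda>m n. complex_of_real (Kreal a v m n))"
    using Kmat_eq_Kreal[OF assms] by blast
  then show ?thesis
    using matrix_op_norm_le_imp_real_contraction[of "Kreal a v"]
      real_contraction_imp_matrix_op_norm_le[of "Kreal a v"] by argo
qed

lemma real_contraction_form_le:
  assumes M: "real_matrix_contraction M"
  shows "(\<Sum>m\<le>N. \<phi> m * (\<Sum>n\<le>N. M m n * \<phi> n)) \<le> (\<Sum>n\<le>N. (\<phi> n)\<^sup>2)"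
proof -
  define x where "x n = (if n \<le> N then \<phi> n else 0)" for n
  have z: "n \<notin> {..N} \<Longrightarrow> x n = 0" for n by (simp add: x_def)
  have sx: "summable (\<lambda>n. (x n)\<^sup>2)" by (rule summable_finite[of "{..N}"]) (auto simp: z)
  have sumx: "(\<Sum>n. (x n)\<^sup>2) = (\<Sum>n\<le>N. (\<phi> n)\<^sup>2)"
    by (subst suminf_finite[of "{..N}"]) (auto simp: z x_def)
  define y where "y m = (\<Sum>n. M m n * x n)" for m
  have ye: "y m = (\<Sum>n\<le>N. M m n * \<phi> n)" for m
    unfolding y_def by (subst suminf_finite[of "{..N}"]) (auto simp: z x_def)
  from M sx have sy: "summable (\<lambda>m. (y m)\<^sup>2)" and yb: "(\<Sum>m. (y m)\<^sup>2) \<le> (\<Sum>n. (x n)\<^sup>2)"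
    unfolding real_matrix_contraction_def y_def by blast+
  have "(\<Sum>m\<le>N. \<phi> m * y m) \<le> (\<Sum>m\<le>N. \<bar>\<phi> m\<bar> * \<bar>y m\<bar>)"
    by (intro sum_mono) (simp add: abs_mult[symmetric])
  also have "\<dots> \<le> L2_set \<phi> {..N} * L2_set y {..N}" by (rule L2_set_mult_ineq)
  also have "\<dots> \<le> L2_set \<phi> {..N} * sqrt (\<Sum>n\<le>N. (\<phi> n)\<^sup>2)"
    unfolding L2_set_def using sum_le_suminf[OF sy, of "{..N}"] yb sumx
    by (intro mult_left_mono real_sqrt_le_mono) (auto simp: sum_nonneg)
  also have "\<dots> = (\<Sum>n\<le>N. (\<phi> n)\<^sup>2)" by (simp add: L2_set_def sum_nonneg)
  finally show ?thesis by (simp add: ye)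
qed

lemma absV_partial_le_negLap_form:
  assumes K: "real_matrix_contraction (Kreal a v)" and a1: "a < 1" and l: "l2 \<psi>"
  shows "(\<Sum>n\<le>N. cmod (v n) * (cmod (\<psi> n))\<^sup>2) \<le> negLap_form a \<psi>"
proof -
  define p where "p n = cmod (\<psi> n)" for n
  define \<phi> where "\<phi> n = sqrtV v n * p n" for n
  define g where "g n = sqrtV v n * \<phi> n" for n
  define Y where "Y = (\<Sum>n\<le>N. g n * p n)"
  have Y: "Y = (\<Sum>n\<le>N. cmod (v n) * (cmod (\<psi> n))\<^sup>2)"
    unfolding Y_def g_def \<phi>_def p_def by (rule sum.cong) (simp_all add: sqrtV_sq power2_eq_square)
  have "(\<Sum>m\<le>N. g m * green_apply a N g m) = (\<Sum>m\<le>N. \<phi> m * (\<Sum>n\<le>N. Kreal a v m n * \<phi> n))"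
    unfolding Kreal_sum_eq_green_apply g_def by (simp add: algebra_simps)
  also have "\<dots> \<le> (\<Sum>n\<le>N. (\<phi> n)\<^sup>2)" by (rule real_contraction_form_le[OF K])
  also have "\<dots> = Y"
    unfolding Y_def g_def \<phi>_def by (simp add: power2_eq_square algebra_simps)
  finally have "2 * Y \<le> (1 - a) * (p 0)\<^sup>2 + (\<Sum>k<N. (p k - p (Suc k))\<^sup>2) + Y"
    using two_sum_mult_le_form_plus_green[OF a1, where N = N and g = g and p = p] unfolding Y_def by linarith
  then have "Y \<le> (1 - a) * (p 0)\<^sup>2 + (\<Sum>k<N. (p k - p (Suc k))\<^sup>2)" by simp
  also have "(\<Sum>k<N. (p k - p (Suc k))\<^sup>2) \<le> (\<Sum>k<N. (cmod (\<psi> k - \<psi> (Suc k)))\<^sup>2)"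
    unfolding p_def by (intro sum_mono) (metis abs_ge_zero norm_triangle_ineq3 power2_abs power_mono)
  also have "\<dots> \<le> (\<Sum>k. (cmod (\<psi> k - \<psi> (Suc k)))\<^sup>2)"
    by (rule sum_le_suminf[OF summable_norm_diff_sq[OF l]]) auto
  finally show ?thesis unfolding Y p_def negLap_form_def by simp
qed

lemma Kmat_contraction_imp_absV_le_negLap:
  assumes "matrix_op_norm_le (Kmat a v) 1" and "a < 1"
  shows "absV_le_negLap (complex_of_real a) v"
  using absV_partial_le_negLap_form[OF assms(1)[unfolded Kmat_op_norm_le_iff[OF assms(2)]] assms(2)]
  by (rule absV_le_negLapI)

section \<open>The form bound implies the bound on \<open>K'\<close>\<close>

lemma summable_absV:
  assumes V: "absV_le_negLap (complex_of_real a) v"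
  shows "summable (\<lambda>n. cmod (v n))"
proof -
  have "(\<Sum>n\<le>N. cmod (v n)) \<le> 2 - a" for N
  proof -
    define \<psi> where "\<psi> n = (if n \<le> N then (1::complex) else 0)" for n
    have l: "l2 \<psi>" by (rule l2_finite_support[of "Suc N"]) (simp add: \<psi>_def)
    have "(\<Sum>n. (cmod (\<psi> n - \<psi> (Suc n)))\<^sup>2) = (\<Sum>n\<in>{N}. (cmod (\<psi> n - \<psi> (Suc n)))\<^sup>2)"
      by (rule suminf_finite) (auto simp: \<psi>_def)
    then have "negLap_form a \<psi> = 2 - a" by (simp add: negLap_form_def \<psi>_def)
    moreover have "(\<Sum>n\<le>N. cmod (v n)) = (\<Sum>n<Suc N. cmod (v n) * (cmod (\<psi> n))\<^sup>2)"
      unfolding lessThan_Suc_atMost by (rule sum.cong) (auto simp: \<psi>_def)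
    ultimately show ?thesis
      using absV_le_negLap_partial[OF V l] by metis
  qed
  then show ?thesis by (rule summable_of_bounded_partial_sums[rotated]) simp
qed

definition cutoff :: "nat \<Rightarrow> nat \<Rightarrow> nat \<Rightarrow> real" where
  "cutoff N j m = max 0 (1 - real (m - N) / real (Suc j))"

lemma cutoff_eq_1: "m \<le> N \<Longrightarrow> cutoff N j m = 1"
  by (simp add: cutoff_def)

lemma cutoff_eq_0: "N + Suc j \<le> m \<Longrightarrow> cutoff N j m = 0"
  by (simp add: cutoff_def field_simps)

lemma cutoff_diff:
  assumes "N \<le> m" "m < N + Suc j"
  shows "cutoff N j m - cutoff N j (Suc m) = 1 / real (Suc j)"
proof -
  have "0 \<le> 1 - real (Suc (m - N)) / real (Suc j)" "0 \<le> 1 - real (m - N) / real (Suc j)"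
    using assms by (simp_all add: field_simps)
  moreover have "Suc m - N = Suc (m - N)" using assms by simp
  ultimately show ?thesis unfolding cutoff_def by (simp add: field_simps)
qed

lemma cutoff_tendsto_1: "(\<lambda>j. cutoff N j m) \<longlonglongrightarrow> 1"
proof -
  have "(\<lambda>j. max 0 (1 - real (m - N) * inverse (real (Suc j)))) \<longlonglongrightarrow> max 0 (1 - real (m - N) * 0)"
    by (intro tendsto_intros LIMSEQ_inverse_real_of_nat)
  then show ?thesis by (simp add: cutoff_def divide_inverse)
qed

lemma sum_diff_sq_cutoff:
  fixes c :: "nat \<Rightarrow> real"
  assumes const: "\<And>m. N \<le> m \<Longrightarrow> c m = c N"
  shows "(\<Sum>m. (c m * cutoff N j m - c (Suc m) * cutoff N j (Suc m))\<^sup>2)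
       = (\<Sum>k<N. (c k - c (Suc k))\<^sup>2) + (c N)\<^sup>2 / real (Suc j)"
proof -
  let ?d = "\<lambda>m. (c m * cutoff N j m - c (Suc m) * cutoff N j (Suc m))\<^sup>2"
  have "(\<Sum>m. ?d m) = (\<Sum>m\<in>{0..<N + Suc j}. ?d m)"
    by (rule suminf_finite) (simp_all add: cutoff_eq_0)
  also have "\<dots> = (\<Sum>m\<in>{0..<N}. ?d m) + (\<Sum>m\<in>{N..<N + Suc j}. ?d m)"
    by (rule sum.atLeastLessThan_concat[symmetric]) auto
  also have "(\<Sum>m\<in>{0..<N}. ?d m) = (\<Sum>k<N. (c k - c (Suc k))\<^sup>2)"
    by (rule sum.cong) (auto simp: cutoff_eq_1)
  also have "(\<Sum>m\<in>{N..<N + Suc j}. ?d m) = (\<Sum>m\<in>{N..<N + Suc j}. (c N / real (Suc j))\<^sup>2)"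
  proof (rule sum.cong)
    fix m assume "m \<in> {N..<N + Suc j}"
    then have "N \<le> m" "m < N + Suc j" by auto
    then show "?d m = (c N / real (Suc j))\<^sup>2"
      using const[of m] const[of "Suc m"] cutoff_diff[of N m j] by (simp add: algebra_simps)
  qed simp
  also have "\<dots> = (c N)\<^sup>2 / real (Suc j)"
    by (simp add: power2_eq_square field_simps del: of_nat_Suc)
  finally show ?thesis .
qed

lemma negLap_form_of_real:
  "negLap_form a (\<lambda>n. complex_of_real (x n)) = (1 - a) * (x 0)\<^sup>2 + (\<Sum>n. (x n - x (Suc n))\<^sup>2)"
  unfolding negLap_form_def by (simp flip: of_real_diff)

text \<open>\<open>green_apply a N g\<close> is constant beyond \<open>N\<close>, hence not in \<open>\<ell>\<^sup>2\<close>; a linear cutoff of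
  length \<open>j + 1\<close> costs only the last term.\<close>
lemma negLap_form_green_apply_cutoff:
  assumes a1: "a < 1"
  shows "negLap_form a (\<lambda>m. complex_of_real (green_apply a N g m * cutoff N j m))
       = (\<Sum>m\<le>N. g m * green_apply a N g m) + (green_apply a N g N)\<^sup>2 / real (Suc j)"
proof -
  let ?c = "green_apply a N g"
  have "(?c k - ?c (Suc k))\<^sup>2 = (\<Sum>n = Suc k..N. g n)\<^sup>2" for k
    using green_apply_Suc[of a N g k] by (metis power2_commute)
  then have "(\<Sum>k<N. (?c k - ?c (Suc k))\<^sup>2) = (\<Sum>k<N. (\<Sum>n = Suc k..N. g n)\<^sup>2)"
    by simp
  moreover have "(1 - a) * (?c 0)\<^sup>2 = (\<Sum>n\<le>N. g n)\<^sup>2 / (1 - a)"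
    using a1 by (simp add: green_apply_0 power2_eq_square)
  moreover have "(\<Sum>m. (?c m * cutoff N j m - ?c (Suc m) * cutoff N j (Suc m))\<^sup>2)
      = (\<Sum>k<N. (?c k - ?c (Suc k))\<^sup>2) + (?c N)\<^sup>2 / real (Suc j)"
    by (rule sum_diff_sq_cutoff) (rule green_apply_const)
  ultimately show ?thesis
    unfolding negLap_form_of_real sum_mult_green_apply by (simp add: cutoff_eq_1)
qed

lemma absV_green_apply_sq_bound:
  assumes V: "absV_le_negLap (complex_of_real a) v" and a1: "a < 1"
  shows "summable (\<lambda>m. cmod (v m) * (green_apply a N g m)\<^sup>2)"
    "(\<Sum>m. cmod (v m) * (green_apply a N g m)\<^sup>2) \<le> (\<Sum>m\<le>N. g m * green_apply a N g m)"
proof -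
  let ?c = "green_apply a N g"
  let ?E = "\<Sum>m\<le>N. g m * ?c m"
  have cut: "(\<Sum>m<M. cmod (v m) * (?c m * cutoff N j m)\<^sup>2) \<le> ?E + (?c N)\<^sup>2 * inverse (real (Suc j))"
    for M j
  proof -
    define \<psi> where "\<psi> m = complex_of_real (?c m * cutoff N j m)" for m
    have l: "l2 \<psi>" by (rule l2_finite_support[of "N + Suc j"]) (simp add: \<psi>_def cutoff_eq_0)
    have "(\<Sum>m<M. cmod (v m) * (?c m * cutoff N j m)\<^sup>2) \<le> negLap_form a \<psi>"
      using absV_le_negLap_partial[OF V l, of M] by (simp add: \<psi>_def norm_mult power_mult_distrib)
    then show ?thesis
      unfolding \<psi>_def negLap_form_green_apply_cutoff[OF a1] by (simp add: divide_inverse)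
  qed
  have bound: "(\<Sum>m\<le>M. cmod (v m) * (?c m)\<^sup>2) \<le> ?E" for M
  proof -
    have L1: "(\<lambda>j. \<Sum>m<Suc M. cmod (v m) * (?c m * cutoff N j m)\<^sup>2)
        \<longlonglongrightarrow> (\<Sum>m<Suc M. cmod (v m) * (?c m * 1)\<^sup>2)"
      by (intro tendsto_sum tendsto_mult tendsto_const tendsto_power cutoff_tendsto_1)
    have L2: "(\<lambda>j. ?E + (?c N)\<^sup>2 * inverse (real (Suc j))) \<longlonglongrightarrow> ?E + (?c N)\<^sup>2 * 0"
      by (intro tendsto_add tendsto_mult tendsto_const LIMSEQ_inverse_real_of_nat)
    have "(\<Sum>m<Suc M. cmod (v m) * (?c m * 1)\<^sup>2) \<le> ?E + (?c N)\<^sup>2 * 0"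
      by (rule tendsto_le[OF trivial_limit_sequentially L2 L1]) (intro always_eventually allI cut)
    then show ?thesis by (simp add: lessThan_Suc_atMost)
  qed
  show "summable (\<lambda>m. cmod (v m) * (?c m)\<^sup>2)" "(\<Sum>m. cmod (v m) * (?c m)\<^sup>2) \<le> ?E"
    using summable_of_bounded_partial_sums[OF _ bound] by simp_all
qed

lemma le_of_le_sqrt_mult:
  fixes F G :: real
  assumes "0 \<le> F" "0 \<le> G" "G \<le> sqrt F * sqrt G"
  shows "G \<le> F"
proof (cases "G = 0")
  case False
  then have "sqrt G * sqrt G \<le> sqrt F * sqrt G" "0 < sqrt G" using assms by simp_all
  then have "sqrt G \<le> sqrt F" by (rule mult_right_le_imp_le)
  then show ?thesis using assms by simp
qed (use assms in simp)

lemma summable_Kre_row: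
  assumes sv: "summable (\<lambda>n. cmod (v n))" and sx: "summable (\<lambda>n. (x n)\<^sup>2)"
  shows "summable (\<lambda>n. Kreal a v m n * x n)"
proof -
  have "summable (\<lambda>n. (sqrtV v n)\<^sup>2)" using sv by (simp add: sqrtV_sq)
  then have swx: "summable (\<lambda>n. \<bar>sqrtV v n\<bar> * \<bar>x n\<bar>)"
    using sx by (rule summable_mult_of_summable_squares(1))
  let ?C = "sqrtV v m * (\<bar>1 / (1 - a)\<bar> + real m)"
  show ?thesis
  proof (rule summable_comparison_test'[OF summable_mult[OF swx, of ?C]])
    fix n
    have "\<bar>green a m n\<bar> \<le> \<bar>1 / (1 - a)\<bar> + real m"
      unfolding green_def by linarith
    then have "sqrtV v m * \<bar>green a m n\<bar> * (sqrtV v n * \<bar>x n\<bar>) \<le> ?C * (sqrtV v n * \<bar>x n\<bar>)"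
      by (intro mult_right_mono mult_left_mono) (simp_all add: sqrtV_nonneg)
    then show "norm (Kreal a v m n * x n) \<le> ?C * (\<bar>sqrtV v n\<bar> * \<bar>x n\<bar>)"
      unfolding Kreal_def real_norm_def abs_mult by (simp add: sqrtV_nonneg mult.assoc)
  qed
qed

lemma Kreal_truncated_bound:
  assumes V: "absV_le_negLap (complex_of_real a) v" and a1: "a < 1"
  shows "summable (\<lambda>m. (\<Sum>n\<le>N. Kreal a v m n * \<phi> n)\<^sup>2)"
    "(\<Sum>m. (\<Sum>n\<le>N. Kreal a v m n * \<phi> n)\<^sup>2) \<le> (\<Sum>n\<le>N. (\<phi> n)\<^sup>2)"
proof -
  define g where "g n = sqrtV v n * \<phi> n" for n
  define y where "y m = (\<Sum>n\<le>N. Kreal a v m n * \<phi> n)" for m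
  have ye: "(y m)\<^sup>2 = cmod (v m) * (green_apply a N g m)\<^sup>2" for m
    unfolding y_def Kreal_sum_eq_green_apply g_def by (simp add: power_mult_distrib sqrtV_sq)
  note energy = absV_green_apply_sq_bound[OF V a1, of N g]
  have sy: "summable (\<lambda>m. (y m)\<^sup>2)" using energy(1) by (simp add: ye)
  then show "summable (\<lambda>m. (\<Sum>n\<le>N. Kreal a v m n * \<phi> n)\<^sup>2)" by (simp add: y_def)
  define G where "G = (\<Sum>m. (y m)\<^sup>2)"
  define F where "F = (\<Sum>n\<le>N. (\<phi> n)\<^sup>2)"
  have "(\<Sum>m\<le>N. g m * green_apply a N g m) = (\<Sum>m\<le>N. \<phi> m * y m)"
    unfolding y_def Kreal_sum_eq_green_apply g_def by (simp add: algebra_simps)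
  then have "G \<le> (\<Sum>m\<le>N. \<phi> m * y m)"
    using energy(2) unfolding G_def ye by simp
  also have "\<dots> \<le> (\<Sum>m\<le>N. \<bar>\<phi> m\<bar> * \<bar>y m\<bar>)"
    by (intro sum_mono) (simp add: abs_mult[symmetric])
  also have "\<dots> \<le> L2_set \<phi> {..N} * L2_set y {..N}"
    by (rule L2_set_mult_ineq)
  also have "\<dots> \<le> sqrt F * sqrt G"
    unfolding L2_set_def F_def G_def using sum_le_suminf[OF sy, of "{..N}"]
    by (intro mult_left_mono) (auto simp: sum_nonneg)
  finally have "G \<le> F"
    by (rule le_of_le_sqrt_mult[rotated 2]) (simp_all add: F_def G_def sum_nonneg suminf_nonneg sy)
  then show "(\<Sum>m. (\<Sum>n\<le>N. Kreal a v m n * \<phi> n)\<^sup>2) \<le> (\<Sum>n\<le>N. (\<phi> n)\<^sup>2)"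
    by (simp add: G_def F_def y_def)
qed

text \<open>The bound on \<open>K'\<close> restricted to \<open>{..N}\<close> passes to all of \<open>\<ell>\<^sup>2\<close> by duality:
  \<open>\<Sum>m\<le>N. (K'x)\<^sub>m\<^sup>2 = \<langle>K'(1\<^sub>{..N} K'x), x\<rangle>\<close>.\<close>
lemma Kreal_contraction_of_absV_le_negLap:
  assumes V: "absV_le_negLap (complex_of_real a) v" and a1: "a < 1"
  shows "real_matrix_contraction (Kreal a v)"
  unfolding real_matrix_contraction_def
proof (intro allI impI)
  fix x :: "nat \<Rightarrow> real" assume sx: "summable (\<lambda>n. (x n)\<^sup>2)"
  have rows: "summable (\<lambda>n. Kreal a v m n * x n)" for m
    by (rule summable_Kre_row[OF summable_absV[OF V] sx])
  define y where "y m = (\<Sum>n. Kreal a v m n * x n)" for m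
  have partial: "(\<Sum>m\<le>N. (y m)\<^sup>2) \<le> (\<Sum>n. (x n)\<^sup>2)" for N
  proof -
    define A where "A = (\<Sum>m\<le>N. (y m)\<^sup>2)"
    define z where "z n = (\<Sum>m\<le>N. Kreal a v n m * y m)" for n
    have "A = (\<Sum>m\<le>N. \<Sum>n. y m * (Kreal a v m n * x n))"
      unfolding A_def power2_eq_square y_def using rows by (simp add: suminf_mult)
    also have "\<dots> = (\<Sum>n. \<Sum>m\<le>N. y m * (Kreal a v m n * x n))"
      by (rule suminf_sum[symmetric]) (use rows in \<open>simp add: summable_mult\<close>)
    also have "\<dots> = (\<Sum>n. z n * x n)"
      unfolding z_def sum_distrib_right by (simp add: Kreal_sym[of a v _ n for n] algebra_simps)
    finally have Az: "A = (\<Sum>n. z n * x n)" .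
    note trunc = Kreal_truncated_bound[OF V a1, where N = N and \<phi> = y]
    have sz: "summable (\<lambda>n. (z n)\<^sup>2)" using trunc(1) by (simp add: z_def)
    have "A \<le> sqrt (\<Sum>n. (z n)\<^sup>2) * sqrt (\<Sum>n. (x n)\<^sup>2)"
      unfolding Az using Cauchy_Schwarz_suminf[OF sz sx] by linarith
    also have "\<dots> \<le> sqrt (\<Sum>n. (x n)\<^sup>2) * sqrt A"
      using trunc(2) by (simp add: mult.commute mult_left_mono suminf_nonneg sx z_def A_def)
    finally have "A \<le> (\<Sum>n. (x n)\<^sup>2)"
      by (rule le_of_le_sqrt_mult[rotated 2]) (simp_all add: A_def sum_nonneg suminf_nonneg sx)
    then show ?thesis by (simp add: A_def)
  qed
  show "(\<forall>m. summable (\<lambda>n. Kreal a v m n * x n)) \<and> summable (\<lambda>m. (\<Sum>n. Kreal a v m n * x n)\<^sup>2)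
      \<and> (\<Sum>m. (\<Sum>n. Kreal a v m n * x n)\<^sup>2) \<le> (\<Sum>n. (x n)\<^sup>2)"
    using rows summable_of_bounded_partial_sums[OF _ partial] by (simp add: y_def)
qed

lemma Kmat_op_norm_le_iff_absV_le_negLap:
  assumes "a < 1"
  shows "matrix_op_norm_le (Kmat a v) 1 \<longleftrightarrow> absV_le_negLap (complex_of_real a) v"
  using Kmat_contraction_imp_absV_le_negLap[OF _ assms]
    Kreal_contraction_of_absV_le_negLap[OF _ assms] Kmat_op_norm_le_iff[OF assms] by blast

section \<open>Points of \<open>[-2, 2]\<close> are not isolated in the spectrum\<close>

lemma cis_arccos_quadratic:
  fixes t :: real assumes "\<bar>t\<bar> \<le> 2"
  shows "(cis (arccos (t / 2)))\<^sup>2 + 1 = complex_of_real t * cis (arccos (t / 2))"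
proof -
  let ?\<theta> = "arccos (t / 2)"
  have c: "cos ?\<theta> = t / 2" using assms by (intro cos_arccos) auto
  have s: "sin ?\<theta> * sin ?\<theta> = 1 - t * t / 4"
    using sin_cos_squared_add[of ?\<theta>] c by (simp add: power2_eq_square)
  show ?thesis
    by (rule complex_eqI) (simp_all add: power2_eq_square c s algebra_simps)
qed

definition truncated_wave :: "complex \<Rightarrow> nat \<Rightarrow> nat \<Rightarrow> nat \<Rightarrow> complex" where
  "truncated_wave e N L n = (if N \<le> n \<and> n < N + L then e ^ n else 0)"

lemma truncated_wave_eq_0: "N + L \<le> n \<Longrightarrow> truncated_wave e N L n = 0"
  by (simp add: truncated_wave_def)

lemma norm_truncated_wave:
  "cmod e = 1 \<Longrightarrow> cmod (truncated_wave e N L n) = (if N \<le> n \<and> n < N + L then 1 else 0)"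
  by (simp add: truncated_wave_def norm_power)

lemma l2norm_truncated_wave:
  assumes "cmod e = 1"
  shows "l2norm (truncated_wave e N L) = sqrt (real L)"
proof -
  have "(\<Sum>n<N + L. (cmod (truncated_wave e N L n))\<^sup>2) = (\<Sum>n<N + L. if n \<in> {N..<N + L} then 1 else 0)"
    by (rule sum.cong) (simp_all add: norm_truncated_wave[OF assms])
  also have "\<dots> = (\<Sum>n\<in>{N..<N + L}. 1)"
    by (rule sum.mono_neutral_cong_right) auto
  finally show ?thesis
    using l2_finite_support(2)[of "N + L", OF truncated_wave_eq_0] by simp
qed

lemma Jop_truncated_wave:
  assumes e: "e\<^sup>2 + 1 = t * e" and N: "2 \<le> N" and n: "n \<notin> {N - 1, N, N + L - 1, N + L}"
  shows "Jop a (truncated_wave e N L) n = t * truncated_wave e N L n"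
proof (cases "n = 0")
  case True
  then show ?thesis using N by (simp add: Jop_def truncated_wave_def)
next
  case False
  let ?inside = "\<lambda>m. N \<le> m \<and> m < N + L"
  have same: "?inside (n - 1) = ?inside n" "?inside (n + 1) = ?inside n"
    using n False by auto
  show ?thesis
  proof (cases "?inside n")
    case True
    have "e ^ (n - 1) + e ^ (n + 1) = e ^ (n - 1) * (e\<^sup>2 + 1)"
      using False by (simp add: power2_eq_square algebra_simps flip: power_Suc power_add)
    also have "\<dots> = t * e ^ n"
      using False unfolding e by (simp add: algebra_simps flip: power_Suc)
    finally show ?thesis
      using \<open>n \<noteq> 0\<close> True same by (simp add: Jop_def truncated_wave_def)
  next
    case outside: False
    then have "\<not> ?inside (n - 1)" "\<not> ?inside (n + 1)" using same by simp_all
    with outside have "truncated_wave e N L (n - 1) = 0" "truncated_wave e N L n = 0"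
      "truncated_wave e N L (n + 1) = 0"
      unfolding truncated_wave_def by meson+
    then show ?thesis using \<open>n \<noteq> 0\<close> by (simp add: Jop_def)
  qed
qed

lemma norm_Jop_sub_le:
  fixes t :: real
  assumes "\<And>m. cmod (\<psi> m) \<le> 1" and "\<bar>t\<bar> \<le> 2" and "n \<noteq> 0"
  shows "cmod (Jop a \<psi> n - complex_of_real t * \<psi> n) \<le> 4"
proof -
  have "cmod (\<psi> (n - 1) + \<psi> (n + 1) - complex_of_real t * \<psi> n)
      \<le> cmod (\<psi> (n - 1)) + cmod (\<psi> (n + 1)) + \<bar>t\<bar> * cmod (\<psi> n)"
    using norm_triangle_ineq4[of "\<psi> (n - 1) + \<psi> (n + 1)" "complex_of_real t * \<psi> n"]
      norm_triangle_ineq[of "\<psi> (n - 1)" "\<psi> (n + 1)"] by (simp add: norm_mult)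
  also have "\<dots> \<le> 1 + 1 + 2 * 1"
    using assms by (intro add_mono mult_mono) auto
  finally show ?thesis using assms(3) by (simp add: Jop_def)
qed

lemma sum_lessThan_indicator:
  fixes M :: nat and c :: real
  assumes "S \<subseteq> {..<M}"
  shows "(\<Sum>n<M. if n \<in> S then c else 0) = c * real (card S)"
proof -
  have "(\<Sum>n<M. if n \<in> S then c else 0) = (\<Sum>n\<in>{n \<in> {..<M}. n \<in> S}. c)"
    by (rule sum.inter_filter[symmetric]) simp
  also have "{n \<in> {..<M}. n \<in> S} = S" using assms by auto
  finally show ?thesis by simp
qed

lemma norm_residual_truncated_wave_sq_le:
  fixes t :: real and e :: complex and N L :: nat
  defines "\<psi> \<equiv> truncated_wave e N L"
  assumes t: "\<bar>t\<bar> \<le> 2" and e: "cmod e = 1" "e\<^sup>2 + 1 = t * e" and N: "2 \<le> N"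
    and small: "\<And>n. N \<le> n \<Longrightarrow> cmod (v n) \<le> \<epsilon>"
  shows "(cmod (Hop a v \<psi> n - complex_of_real t * \<psi> n))\<^sup>2
    \<le> 2 * (if n \<in> {N - 1, N, N + L - 1, N + L} then 16 else 0) + 2 * (if n \<in> {N..<N + L} then \<epsilon>\<^sup>2 else 0)"
proof -
  define h where "h = Jop a \<psi> n - complex_of_real t * \<psi> n"
  have h2: "(cmod h)\<^sup>2 \<le> (if n \<in> {N - 1, N, N + L - 1, N + L} then 16 else 0)"
  proof (cases "n \<in> {N - 1, N, N + L - 1, N + L}")
    case True
    then have "n \<noteq> 0" using N by auto
    have "cmod h \<le> 4"
      unfolding h_def by (rule norm_Jop_sub_le[OF _ t \<open>n \<noteq> 0\<close>]) (simp add: \<psi>_def norm_truncated_wave[OF e(1)])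
    then show ?thesis using True power_mono[of "cmod h" 4 2] by simp
  next
    case False
    then show ?thesis unfolding h_def \<psi>_def using Jop_truncated_wave[OF e(2) N] by simp
  qed
  have v2: "(cmod (v n * \<psi> n))\<^sup>2 \<le> (if n \<in> {N..<N + L} then \<epsilon>\<^sup>2 else 0)"
    using small[of n] power_mono[of "cmod (v n)" \<epsilon> 2]
    by (auto simp: \<psi>_def norm_mult norm_truncated_wave[OF e(1)])
  have "(cmod (Hop a v \<psi> n - complex_of_real t * \<psi> n))\<^sup>2 \<le> (cmod h + cmod (v n * \<psi> n))\<^sup>2"
    unfolding h_def Hop_def
    by (intro power_mono) (auto simp: algebra_simps intro: order_trans[OF _ norm_triangle_ineq])
  also have "\<dots> \<le> 2 * (cmod h)\<^sup>2 + 2 * (cmod (v n * \<psi> n))\<^sup>2"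
    using sum_squares_bound[of "cmod h" "cmod (v n * \<psi> n)"] by (simp add: power2_sum)
  finally show ?thesis using h2 v2 by linarith
qed

lemma truncated_wave_residual_bound:
  fixes t :: real and e :: complex and N L :: nat
  defines "\<psi> \<equiv> truncated_wave e N L"
  assumes t: "\<bar>t\<bar> \<le> 2" and e: "cmod e = 1" "e\<^sup>2 + 1 = t * e" and N: "2 \<le> N"
    and small: "\<And>n. N \<le> n \<Longrightarrow> cmod (v n) \<le> \<epsilon>"
  shows "(l2norm (\<lambda>n. Hop a v \<psi> n - complex_of_real t * \<psi> n))\<^sup>2 \<le> 128 + 2 * \<epsilon>\<^sup>2 * real L"
proof -
  define B where "B = {N - 1, N, N + L - 1, N + L}"
  define r where "r n = Hop a v \<psi> n - complex_of_real t * \<psi> n" for n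
  define M where "M = N + L + 1"
  have r2: "(cmod (r n))\<^sup>2 \<le> 2 * (if n \<in> B then 16 else 0) + 2 * (if n \<in> {N..<N + L} then \<epsilon>\<^sup>2 else 0)"
    for n unfolding r_def B_def \<psi>_def by (rule norm_residual_truncated_wave_sq_le[OF t e N small])
  have "r n = 0" if "M \<le> n" for n
  proof -
    have "n \<notin> B" "\<not> n < N + L" using that by (auto simp: B_def M_def)
    then show ?thesis using r2[of n] by simp
  qed
  then have "(l2norm r)\<^sup>2 = (\<Sum>n<M. (cmod (r n))\<^sup>2)"
    using l2_finite_support(2)[of M r] by (simp add: sum_nonneg)
  also have "\<dots> \<le> (\<Sum>n<M. 2 * (if n \<in> B then 16 else 0) + 2 * (if n \<in> {N..<N + L} then \<epsilon>\<^sup>2 else 0))"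
    by (rule sum_mono) (rule r2)
  also have "\<dots> = 2 * (16 * real (card B)) + 2 * (\<epsilon>\<^sup>2 * real (card {N..<N + L}))"
    unfolding sum.distrib sum_distrib_left[symmetric]
    by (subst (1 2) sum_lessThan_indicator) (auto simp: B_def M_def)
  also have "card B \<le> 4"
    unfolding B_def by (rule order_trans[OF card_insert_le_m1]) (auto simp: card_insert_le_m1)
  finally show ?thesis unfolding r_def by simp
qed

lemma finite_support_in_Hdom:
  assumes "\<And>n. M \<le> n \<Longrightarrow> \<psi> n = 0"
  shows "\<psi> \<in> Hdom a v"
  unfolding Hdom_def using l2_finite_support(1)[of M] assms by simp

lemma approximate_eigenvector:
  fixes t :: real
  assumes t: "\<bar>t\<bar> \<le> 2" and v0: "v \<longlonglongrightarrow> 0"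
  shows "\<exists>\<psi>\<in>Hdom a v. C * l2norm (\<lambda>n. Hop a v \<psi> n - complex_of_real t * \<psi> n) < l2norm \<psi>"
proof -
  define C' where "C' = max \<bar>C\<bar> 1"
  have C'1: "1 \<le> C'" by (simp add: C'_def)
  define \<epsilon> where "\<epsilon> = 1 / (2 * C')"
  obtain N0 where N0: "\<And>n. N0 \<le> n \<Longrightarrow> cmod (v n) < \<epsilon>"
    using v0 C'1 unfolding LIMSEQ_iff \<epsilon>_def by force
  define L where "L = nat \<lceil>256 * C'\<^sup>2\<rceil> + 1"
  have L: "256 * C'\<^sup>2 < real L"
    unfolding L_def using le_of_int_ceiling[of "256 * C'\<^sup>2"] by linarith
  define e where "e = cis (arccos (t / 2))"
  have e: "cmod e = 1" "e\<^sup>2 + 1 = complex_of_real t * e"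
    unfolding e_def using cis_arccos_quadratic[OF t] by simp_all
  define \<psi> where "\<psi> = truncated_wave e (N0 + 2) L"
  define r where "r n = Hop a v \<psi> n - complex_of_real t * \<psi> n" for n
  have "(l2norm r)\<^sup>2 \<le> 128 + 2 * \<epsilon>\<^sup>2 * real L"
    unfolding r_def \<psi>_def using N0
    by (intro truncated_wave_residual_bound[OF t e]) (auto intro: less_imp_le)
  then have "(C' * \<bar>l2norm r\<bar>)\<^sup>2 \<le> 128 * C'\<^sup>2 + real L / 2"
    using C'1 by (simp add: power_mult_distrib \<epsilon>_def power2_eq_square field_simps)
  also have "\<dots> < (l2norm \<psi>)\<^sup>2"
    using L unfolding \<psi>_def l2norm_truncated_wave[OF e(1)] by simp
  finally have lt: "C' * \<bar>l2norm r\<bar> < l2norm \<psi>"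
    by (rule power2_less_imp_less) (simp add: \<psi>_def l2norm_truncated_wave[OF e(1)])
  have le: "C * l2norm r \<le> C' * \<bar>l2norm r\<bar>"
  proof -
    have "C * l2norm r \<le> \<bar>C\<bar> * \<bar>l2norm r\<bar>" by (simp add: abs_mult[symmetric])
    also have "\<dots> \<le> C' * \<bar>l2norm r\<bar>" by (intro mult_right_mono) (simp_all add: C'_def)
    finally show ?thesis .
  qed
  have "\<psi> \<in> Hdom a v"
    unfolding \<psi>_def by (rule finite_support_in_Hdom) (rule truncated_wave_eq_0)
  moreover have "C * l2norm r < l2norm \<psi>" using lt le by linarith
  ultimately show ?thesis unfolding r_def by blast
qed

lemma real_interval_subset_spectrum_H:
  fixes t :: real
  assumes "\<bar>t\<bar> \<le> 2" and "v \<longlonglongrightarrow> 0"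
  shows "complex_of_real t \<in> spectrum_H a v"
proof -
  have "complex_of_real t \<notin> resolvent_set a v"
  proof
    assume "complex_of_real t \<in> resolvent_set a v"
    then obtain C where C: "\<forall>\<psi>\<in>Hdom a v. l2norm \<psi> \<le> C * l2norm (\<lambda>n. Hop a v \<psi> n - complex_of_real t * \<psi> n)"
      unfolding resolvent_set_def by blast
    obtain \<psi> where "\<psi> \<in> Hdom a v" "C * l2norm (\<lambda>n. Hop a v \<psi> n - complex_of_real t * \<psi> n) < l2norm \<psi>"
      using approximate_eigenvector[OF assms] by blast
    with C show False by (meson not_le)
  qed
  then show ?thesis by (simp add: spectrum_H_def)
qed

lemma real_interval_islimpt_spectrum_H:
  fixes t :: real
  assumes t: "\<bar>t\<bar> \<le> 2" and v0: "v \<longlonglongrightarrow> 0"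
  shows "complex_of_real t islimpt spectrum_H a v"
  unfolding islimpt_approachable
proof (intro allI impI)
  fix \<epsilon> :: real assume "0 < \<epsilon>"
  define d where "d = min (\<epsilon> / 2) 1"
  define s where "s = (if t \<le> 0 then t + d else t - d)"
  have d: "0 < d" "d < \<epsilon>" "d \<le> 1" using \<open>0 < \<epsilon>\<close> by (auto simp: d_def)
  have "\<bar>s\<bar> \<le> 2" "\<bar>s - t\<bar> = d" using t d by (auto simp: s_def)
  then show "\<exists>x'\<in>spectrum_H a v. x' \<noteq> complex_of_real t \<and> dist x' (complex_of_real t) < \<epsilon>"
    using real_interval_subset_spectrum_H[OF _ v0] d
    by (intro bexI[of _ "complex_of_real s"]) (auto simp: dist_norm simp flip: of_real_diff)
qed

section \<open>No eigenvalues off \<open>[-2, 2]\<close>\<close>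

lemma Joukowski_preimage:
  fixes z :: complex
  assumes "\<And>t. \<bar>t\<bar> \<le> 2 \<Longrightarrow> z \<noteq> complex_of_real t"
  shows "\<exists>k. k \<noteq> 0 \<and> cmod k < 1 \<and> z = k + inverse k"
proof -
  define s where "s = csqrt (z\<^sup>2 - 4)"
  define k1 where "k1 = (z + s) / 2"
  define k2 where "k2 = (z - s) / 2"
  have "k1 * k2 = (z\<^sup>2 - s\<^sup>2) / 4" by (simp add: k1_def k2_def power2_eq_square algebra_simps)
  then have prod: "k1 * k2 = 1" by (simp add: s_def)
  then have k10: "k1 \<noteq> 0" by auto
  with prod have k2: "k2 = inverse k1" by (simp add: field_simps)
  have z: "z = k1 + k2" by (simp add: k1_def k2_def field_simps)
  consider "cmod k1 < 1" | "cmod k1 > 1" | "cmod k1 = 1" by linarith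
  then show ?thesis
  proof cases
    case 1
    then show ?thesis using k10 z k2 by blast
  next
    case 2
    then have "cmod k2 < 1" by (simp add: k2 norm_inverse inverse_less_1_iff)
    then show ?thesis using z k2 k10 by (intro exI[of _ k2]) auto
  next
    case 3
    then have "inverse k1 = cnj k1"
      using complex_norm_square[of k1] k10 by (simp add: field_simps)
    then have "z = complex_of_real (2 * Re k1)" using z k2 by (simp add: complex_eq_iff)
    moreover have "\<bar>2 * Re k1\<bar> \<le> 2" using abs_Re_le_cmod[of k1] 3 by simp
    ultimately show ?thesis using assms by blast
  qed
qed

text \<open>The solution of \<open>J\<^sub>b \<theta> = z \<theta>\<close> that also satisfies the boundary row \<open>b \<theta>\<^sub>0 + \<theta>\<^sub>1 = z \<theta>\<^sub>0\<close>.\<close>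
fun regular_solution :: "complex \<Rightarrow> complex \<Rightarrow> nat \<Rightarrow> complex" where
  "regular_solution z b 0 = 1"
| "regular_solution z b (Suc 0) = z - b"
| "regular_solution z b (Suc (Suc n)) = z * regular_solution z b (Suc n) - regular_solution z b n"

lemma power_mult_regular_solution:
  assumes k0: "k \<noteq> 0" and z: "z = k + inverse k"
  shows "k ^ j * regular_solution z b j = (\<Sum>i<j. k ^ (2 * i)) * (1 - b * k) + k ^ (2 * j)"
proof -
  let ?\<theta> = "regular_solution z b" and ?E = "\<lambda>j. (\<Sum>i<j. k ^ (2 * i)) * (1 - b * k) + k ^ (2 * j)"
  have kz: "k * z = k\<^sup>2 + 1" using k0 by (simp add: z field_simps power2_eq_square)
  have "k ^ j * ?\<theta> j = ?E j \<and> k ^ Suc j * ?\<theta> (Suc j) = ?E (Suc j)"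
  proof (induction j)
    case 0
    show ?case using kz by (simp add: algebra_simps power2_eq_square)
  next
    case (Suc j)
    define G where "G = (\<Sum>i<j. k ^ (2 * i))"
    have E: "?E j = G * (1 - b * k) + k ^ (2 * j)"
      "?E (Suc j) = (G + k ^ (2 * j)) * (1 - b * k) + k ^ (2 * j) * k\<^sup>2"
      "?E (Suc (Suc j)) = (G + k ^ (2 * j) + k ^ (2 * j) * k\<^sup>2) * (1 - b * k) + k ^ (2 * j) * k\<^sup>2 * k\<^sup>2"
      by (simp_all add: G_def power_add power2_eq_square mult.assoc)
    have "k ^ Suc (Suc j) * ?\<theta> (Suc (Suc j)) = (k * z) * (k ^ Suc j * ?\<theta> (Suc j)) - k\<^sup>2 * (k ^ j * ?\<theta> j)"
      by (simp add: power2_eq_square algebra_simps)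
    also have "\<dots> = (k\<^sup>2 + 1) * ?E (Suc j) - k\<^sup>2 * ?E j" using Suc kz by simp
    also have "\<dots> = ?E (Suc (Suc j))" unfolding E by (simp add: algebra_simps)
    finally show ?case using Suc by simp
  qed
  then show ?thesis by simp
qed

lemma norm_power_mult_regular_solution_le:
  assumes "k \<noteq> 0" "z = k + inverse k" "cmod k < 1"
  shows "cmod (k ^ j * regular_solution z b j) \<le> real j * cmod (1 - b * k) + cmod k ^ (2 * j)"
proof -
  have "cmod (\<Sum>i<j. k ^ (2 * i)) \<le> (\<Sum>i<j. 1)"
    using assms(3) by (intro order_trans[OF norm_sum] sum_mono) (simp add: norm_power power_le_one)
  then have "cmod (\<Sum>i<j. k ^ (2 * i)) * cmod (1 - b * k) \<le> real j * cmod (1 - b * k)"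
    by (intro mult_right_mono) auto
  moreover have "cmod ((\<Sum>i<j. k ^ (2 * i)) * (1 - b * k) + k ^ (2 * j))
      \<le> cmod (\<Sum>i<j. k ^ (2 * i)) * cmod (1 - b * k) + cmod k ^ (2 * j)"
    by (metis norm_mult norm_power norm_triangle_ineq)
  ultimately show ?thesis unfolding power_mult_regular_solution[OF assms(1,2)] by linarith
qed

text \<open>For \<open>z = k + 1/k\<close>, \<open>resolvent_bound k a (min m n)\<close> bounds \<open>|(J\<^sub>a - z)\<inverse>(m,n)|\<close>.\<close>
definition resolvent_bound :: "complex \<Rightarrow> real \<Rightarrow> nat \<Rightarrow> real" where
  "resolvent_bound k a j =
     cmod k * cmod (k ^ j * regular_solution (k + inverse k) (complex_of_real a) j)
     / cmod (1 - complex_of_real a * k)"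

lemma one_minus_le_norm_one_minus_mult:
  assumes "0 \<le> a" and "cmod k < 1"
  shows "1 - a \<le> cmod (1 - complex_of_real a * k)"
proof -
  have "cmod (complex_of_real a * k) \<le> a"
    using assms mult_left_mono[of "cmod k" 1 a] by (simp add: norm_mult)
  then show ?thesis using norm_triangle_ineq2[of 1 "complex_of_real a * k"] by simp
qed

lemma resolvent_bound_less_green:
  assumes a0: "0 \<le> a" and a1: "a < 1" and k0: "k \<noteq> 0" and k1: "cmod k < 1"
  shows "0 \<le> resolvent_bound k a j" "resolvent_bound k a j < green a j j"
proof -
  let ?d = "cmod (1 - complex_of_real a * k)"
  have d: "1 - a \<le> ?d" by (rule one_minus_le_norm_one_minus_mult[OF a0 k1])
  with a1 have d0: "0 < ?d" by linarith
  show "0 \<le> resolvent_bound k a j" by (simp add: resolvent_bound_def)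
  have "resolvent_bound k a j \<le> cmod k * (real j * ?d + cmod k ^ (2 * j)) / ?d"
    unfolding resolvent_bound_def using d0
    by (intro divide_right_mono mult_left_mono norm_power_mult_regular_solution_le k0 k1) auto
  also have "\<dots> = cmod k * real j + cmod k ^ (2 * j + 1) / ?d"
    using d0 by (simp add: field_simps)
  also have "\<dots> < real j + 1 / (1 - a)"
  proof (rule add_le_less_mono)
    show "cmod k * real j \<le> real j" using k1 by (simp add: mult_left_le_one_le)
    have "cmod k ^ Suc (2 * j) < 1" using k0 k1 by (intro power_Suc_less_one) auto
    then have "cmod k ^ (2 * j + 1) / ?d < 1 / ?d" using d0 by (simp add: divide_strict_right_mono del: power_Suc)
    also have "\<dots> \<le> 1 / (1 - a)" using d a1 by (simp add: frac_le)
    finally show "cmod k ^ (2 * j + 1) / ?d < 1 / (1 - a)" .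
  qed
  finally show "resolvent_bound k a j < green a j j" by (simp add: green_def)
qed

lemma regular_solution_wronskian:
  assumes f: "\<And>n. f n = Jop b \<psi> n - z * \<psi> n"
  shows "regular_solution z b N * \<psi> (Suc N) - regular_solution z b (Suc N) * \<psi> N
       = (\<Sum>n\<le>N. regular_solution z b n * f n)"
  by (induction N) (simp_all add: f Jop_def algebra_simps)

lemma Jost_wronskian:
  assumes f: "\<And>n. f n = Jop b \<psi> n - z * \<psi> n" and k0: "k \<noteq> 0" and z: "z = k + inverse k"
  shows "k ^ N * \<psi> (Suc N) - k ^ Suc N * \<psi> N = (inverse k - b) * \<psi> 0 + (\<Sum>n\<le>N. k ^ n * f n)"
proof (induction N)
  case 0
  then show ?case using k0 by (simp add: f Jop_def z algebra_simps)
next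
  case (Suc N)
  have "k ^ Suc N * \<psi> (Suc (Suc N)) - k ^ Suc (Suc N) * \<psi> (Suc N)
      = (k ^ N * \<psi> (Suc N) - k ^ Suc N * \<psi> N) + k ^ Suc N * f (Suc N)"
    using k0 by (simp add: f Jop_def z field_simps)
  then show ?case using Suc by simp
qed

lemma regular_Jost_wronskian:
  assumes k0: "k \<noteq> 0" and z: "z = k + inverse k"
  shows "regular_solution z b N * k ^ Suc N - regular_solution z b (Suc N) * k ^ N = b - inverse k"
proof (induction N)
  case (Suc N)
  let ?\<theta> = "regular_solution z b"
  have "?\<theta> (Suc N) * k ^ Suc (Suc N) - ?\<theta> (Suc (Suc N)) * k ^ Suc N
      = ?\<theta> N * k ^ Suc N - ?\<theta> (Suc N) * (k ^ Suc N * z - k ^ Suc (Suc N))"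
    by (simp add: algebra_simps)
  also have "k ^ Suc N * z - k ^ Suc (Suc N) = k ^ N" using k0 by (simp add: z field_simps)
  finally show ?case using Suc by simp
qed (simp add: z)

lemma Jost_series_vanishes:
  assumes f: "\<And>n. f n = Jop b \<psi> n - z * \<psi> n" and k0: "k \<noteq> 0" and k1: "cmod k < 1"
    and z: "z = k + inverse k" and \<psi>0: "\<psi> \<longlonglongrightarrow> 0" and sf: "summable (\<lambda>n. cmod (f n))"
  shows "summable (\<lambda>n. k ^ n * f n)" "(inverse k - b) * \<psi> 0 + (\<Sum>n. k ^ n * f n) = 0"
proof -
  show sg: "summable (\<lambda>n. k ^ n * f n)"
  proof (rule summable_comparison_test'[OF sf])
    fix n show "norm (k ^ n * f n) \<le> cmod (f n)"
      using k1 by (simp add: norm_mult norm_power mult_left_le_one_le power_le_one)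
  qed
  have "(\<lambda>N. (inverse k - b) * \<psi> 0 + (\<Sum>n<Suc N. k ^ n * f n)) \<longlonglongrightarrow> (inverse k - b) * \<psi> 0 + (\<Sum>n. k ^ n * f n)"
    by (intro tendsto_add tendsto_const LIMSEQ_Suc[OF summable_LIMSEQ[OF sg]])
  moreover have "(\<lambda>N. k ^ N * \<psi> (Suc N) - k ^ Suc N * \<psi> N) \<longlonglongrightarrow> 0 * 0 - 0 * 0"
    using LIMSEQ_power_zero[OF k1] \<psi>0
    by (intro tendsto_diff tendsto_mult LIMSEQ_Suc) (simp_all add: LIMSEQ_power_zero k1)
  ultimately show "(inverse k - b) * \<psi> 0 + (\<Sum>n. k ^ n * f n) = 0"
    unfolding Jost_wronskian[OF f k0 z] lessThan_Suc_atMost by (simp add: LIMSEQ_unique)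
qed

lemma resolvent_representation:
  assumes f: "\<And>n. f n = Jop b \<psi> n - z * \<psi> n" and k0: "k \<noteq> 0" and k1: "cmod k < 1"
    and z: "z = k + inverse k" and \<psi>0: "\<psi> \<longlonglongrightarrow> 0" and sf: "summable (\<lambda>n. cmod (f n))"
  shows "\<psi> N * (b - inverse k) = k ^ N * (\<Sum>n\<le>N. regular_solution z b n * f n)
           + regular_solution z b N * (\<Sum>i. k ^ (i + Suc N) * f (i + Suc N))"
proof -
  let ?\<theta> = "regular_solution z b"
  note Jost = Jost_series_vanishes[OF f k0 k1 z \<psi>0 sf]
  have "(\<Sum>n. k ^ n * f n) = (\<Sum>i. k ^ (i + Suc N) * f (i + Suc N)) + (\<Sum>n<Suc N. k ^ n * f n)"
    by (rule suminf_split_initial_segment[OF Jost(1)])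
  then have tail: "k ^ N * \<psi> (Suc N) - k ^ Suc N * \<psi> N = - (\<Sum>i. k ^ (i + Suc N) * f (i + Suc N))"
    using Jost(2) unfolding Jost_wronskian[OF f k0 z] lessThan_Suc_atMost by (simp add: algebra_simps)
  have "\<psi> N * (?\<theta> N * k ^ Suc N - ?\<theta> (Suc N) * k ^ N)
      = k ^ N * (?\<theta> N * \<psi> (Suc N) - ?\<theta> (Suc N) * \<psi> N) - ?\<theta> N * (k ^ N * \<psi> (Suc N) - k ^ Suc N * \<psi> N)"
    by (simp add: algebra_simps)
  then show ?thesis
    unfolding regular_Jost_wronskian[OF k0 z] regular_solution_wronskian[OF f] tail by simp
qed

lemma norm_suminf_power_mult_le:
  fixes k :: complex
  assumes k1: "cmod k \<le> 1" and sg: "summable (\<lambda>i. cmod (g i))"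
  shows "cmod (\<Sum>i. k ^ (i + m) * g i) \<le> cmod k ^ m * (\<Sum>i. cmod (g i))"
proof -
  have le: "cmod (k ^ (i + m) * g i) \<le> cmod k ^ m * cmod (g i)" for i
    using k1 by (simp add: norm_mult norm_power power_add mult_left_le_one_le power_le_one mult.assoc)
  have sm: "summable (\<lambda>i. cmod k ^ m * cmod (g i))" using sg by (rule summable_mult)
  have "summable (\<lambda>i. cmod (k ^ (i + m) * g i))"
    by (rule summable_comparison_test'[OF sm]) (simp add: le)
  then have "cmod (\<Sum>i. k ^ (i + m) * g i) \<le> (\<Sum>i. cmod (k ^ (i + m) * g i))"
    by (rule summable_norm)
  also have "\<dots> \<le> (\<Sum>i. cmod k ^ m * cmod (g i))"
    by (rule suminf_le[OF le]) (use sm \<open>summable (\<lambda>i. cmod (k ^ (i + m) * g i))\<close> in auto)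
  also have "\<dots> = cmod k ^ m * (\<Sum>i. cmod (g i))" by (rule suminf_mult[OF sg])
  finally show ?thesis .
qed

lemma norm_one_minus_mult_resolvent_bound:
  assumes "complex_of_real a * k \<noteq> 1"
  shows "cmod (1 - complex_of_real a * k) * resolvent_bound k a n
       = cmod k * cmod (k ^ n * regular_solution (k + inverse k) (complex_of_real a) n)"
  using assms by (simp add: resolvent_bound_def)

lemma norm_resolvent_head_le:
  assumes k1: "cmod k < 1" and z: "z = k + inverse k" and ak: "complex_of_real a * k \<noteq> 1"
  shows "cmod (k * (k ^ N * (\<Sum>n\<le>N. regular_solution z (complex_of_real a) n * f n)))
       \<le> cmod (1 - complex_of_real a * k) * (\<Sum>n\<le>N. resolvent_bound k a n * cmod (f n))"
proof -
  let ?\<theta> = "regular_solution z (complex_of_real a)"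
  have "cmod (k * (k ^ N * (\<Sum>n\<le>N. ?\<theta> n * f n)))
      \<le> (\<Sum>n\<le>N. cmod k * cmod k ^ N * cmod (?\<theta> n) * cmod (f n))"
    unfolding sum_distrib_left
    by (rule order_trans[OF norm_sum]) (simp add: norm_mult norm_power mult.assoc)
  also have "\<dots> \<le> (\<Sum>n\<le>N. cmod k * cmod (k ^ n * ?\<theta> n) * cmod (f n))"
  proof (intro sum_mono mult_right_mono)
    fix n assume "n \<in> {..N}"
    then have "cmod k ^ N * cmod (?\<theta> n) \<le> cmod k ^ n * cmod (?\<theta> n)"
      using k1 by (intro mult_right_mono power_decreasing) auto
    then show "cmod k * cmod k ^ N * cmod (?\<theta> n) \<le> cmod k * cmod (k ^ n * ?\<theta> n)"
      by (simp add: norm_mult norm_power mult.assoc mult_left_mono)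
  qed simp_all
  finally show ?thesis
    unfolding sum_distrib_left z mult.assoc[symmetric] norm_one_minus_mult_resolvent_bound[OF ak] .
qed

lemma norm_resolvent_tail_le:
  assumes k1: "cmod k < 1" and z: "z = k + inverse k" and ak: "complex_of_real a * k \<noteq> 1"
    and sf: "summable (\<lambda>n. cmod (f n))"
  shows "cmod (k * regular_solution z (complex_of_real a) N * (\<Sum>i. k ^ (i + Suc N) * f (i + Suc N)))
       \<le> cmod (1 - complex_of_real a * k) * (resolvent_bound k a N * (\<Sum>i. cmod (f (i + Suc N))))"
proof -
  let ?\<theta> = "regular_solution z (complex_of_real a)" and ?T = "\<Sum>i. cmod (f (i + Suc N))"
  have sT: "summable (\<lambda>i. cmod (f (i + Suc N)))" using sf by (rule summable_ignore_initial_segment)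
  have "cmod (\<Sum>i. k ^ (i + Suc N) * f (i + Suc N)) \<le> cmod k ^ Suc N * ?T"
    using k1 sT by (intro norm_suminf_power_mult_le) auto
  also have "\<dots> \<le> cmod k ^ N * ?T"
    using k1 suminf_nonneg[OF sT] by (intro mult_right_mono power_decreasing) auto
  finally have "cmod (k * ?\<theta> N * (\<Sum>i. k ^ (i + Suc N) * f (i + Suc N)))
      \<le> cmod k * cmod (?\<theta> N) * (cmod k ^ N * ?T)"
    by (simp add: norm_mult mult_left_mono)
  then show ?thesis
    unfolding mult.assoc[symmetric] norm_one_minus_mult_resolvent_bound[OF ak] z
    by (simp add: norm_mult norm_power algebra_simps)
qed

lemma suminf_min_split:
  fixes c g :: "nat \<Rightarrow> real"
  assumes "summable g"
  shows "summable (\<lambda>n. c (min N n) * g n)"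
    "(\<Sum>n. c (min N n) * g n) = (\<Sum>n\<le>N. c n * g n) + c N * (\<Sum>i. g (i + Suc N))"
proof -
  have st: "summable (\<lambda>i. g (i + Suc N))" using assms by (rule summable_ignore_initial_segment)
  then show s: "summable (\<lambda>n. c (min N n) * g n)"
    using summable_iff_shift[of "\<lambda>n. c (min N n) * g n" "Suc N"] summable_mult[OF st, of "c N"] by simp
  show "(\<Sum>n. c (min N n) * g n) = (\<Sum>n\<le>N. c n * g n) + c N * (\<Sum>i. g (i + Suc N))"
    using suminf_split_initial_segment[OF s, of "Suc N"] suminf_mult[OF st, of "c N"]
    by (simp add: lessThan_Suc_atMost)
qed

lemma norm_le_resolvent_bound_series:
  assumes f: "\<And>n. f n = Jop (complex_of_real a) \<psi> n - z * \<psi> n"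
    and k0: "k \<noteq> 0" and k1: "cmod k < 1" and z: "z = k + inverse k"
    and a0: "0 \<le> a" and a1: "a < 1" and \<psi>0: "\<psi> \<longlonglongrightarrow> 0" and sf: "summable (\<lambda>n. cmod (f n))"
  shows "summable (\<lambda>n. resolvent_bound k a (min N n) * cmod (f n))"
    "cmod (\<psi> N) \<le> (\<Sum>n. resolvent_bound k a (min N n) * cmod (f n))"
proof -
  let ?\<theta> = "regular_solution z (complex_of_real a)" and ?r = "resolvent_bound k a"
  let ?d = "cmod (1 - complex_of_real a * k)" and ?T = "\<Sum>i. cmod (f (i + Suc N))"
  have d0: "0 < ?d" using one_minus_le_norm_one_minus_mult[OF a0 k1] a1 by linarith
  then have ak: "complex_of_real a * k \<noteq> 1" by auto
  have "\<psi> N * (1 - complex_of_real a * k) = - k * (\<psi> N * (complex_of_real a - inverse k))"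
    using k0 by (simp add: field_simps)
  also have "\<dots> = - k * (k ^ N * (\<Sum>n\<le>N. ?\<theta> n * f n)
      + ?\<theta> N * (\<Sum>i. k ^ (i + Suc N) * f (i + Suc N)))"
    using resolvent_representation[OF f k0 k1 z \<psi>0 sf, of N] by simp
  also have "\<dots> = - (k * (k ^ N * (\<Sum>n\<le>N. ?\<theta> n * f n))
      + k * ?\<theta> N * (\<Sum>i. k ^ (i + Suc N) * f (i + Suc N)))"
    by (simp add: algebra_simps)
  finally have eq: "\<psi> N * (1 - complex_of_real a * k) = - (k * (k ^ N * (\<Sum>n\<le>N. ?\<theta> n * f n))
      + k * ?\<theta> N * (\<Sum>i. k ^ (i + Suc N) * f (i + Suc N)))" .
  have "cmod (\<psi> N) * ?d = cmod (k * (k ^ N * (\<Sum>n\<le>N. ?\<theta> n * f n))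
      + k * ?\<theta> N * (\<Sum>i. k ^ (i + Suc N) * f (i + Suc N)))"
    using arg_cong[OF eq, of cmod] by (simp only: norm_mult norm_minus_cancel)
  also have "\<dots> \<le> cmod (k * (k ^ N * (\<Sum>n\<le>N. ?\<theta> n * f n)))
      + cmod (k * ?\<theta> N * (\<Sum>i. k ^ (i + Suc N) * f (i + Suc N)))"
    by (rule norm_triangle_ineq)
  also have "\<dots> \<le> ?d * (\<Sum>n\<le>N. ?r n * cmod (f n)) + ?d * (?r N * ?T)"
    using norm_resolvent_head_le[OF k1 z ak, of N f] norm_resolvent_tail_le[OF k1 z ak sf, of N]
    by (rule add_mono)
  finally have "?d * cmod (\<psi> N) \<le> ?d * ((\<Sum>n\<le>N. ?r n * cmod (f n)) + ?r N * ?T)"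
    by (simp add: algebra_simps)
  with d0 have bound: "cmod (\<psi> N) \<le> (\<Sum>n\<le>N. ?r n * cmod (f n)) + ?r N * ?T"
    by (simp add: mult_le_cancel_left_pos)
  show "summable (\<lambda>n. ?r (min N n) * cmod (f n))"
    using sf by (rule suminf_min_split)
  show "cmod (\<psi> N) \<le> (\<Sum>n. ?r (min N n) * cmod (f n))"
    using bound suminf_min_split(2)[OF sf, of ?r N] by simp
qed

lemma l2_subsolution_gap_vanishes:
  fixes u y gap :: "nat \<Rightarrow> real"
  assumes u0: "\<And>n. 0 \<le> u n" and gap0: "\<And>n. 0 \<le> gap n"
    and su: "summable (\<lambda>n. (u n)\<^sup>2)" and sy: "summable (\<lambda>n. (y n)\<^sup>2)"
    and yu: "(\<Sum>n. (y n)\<^sup>2) \<le> (\<Sum>n. (u n)\<^sup>2)" and sub: "\<And>n. u n \<le> y n - gap n"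
  shows "u n * gap n = 0"
proof -
  have uy: "summable (\<lambda>n. u n * y n)" by (rule summable_mult_of_summable_squares(2)[OF su sy])
  have ug: "0 \<le> u n * gap n" "u n * gap n \<le> u n * y n - (u n)\<^sup>2" for n
    using u0[of n] gap0[of n] mult_left_mono[OF sub[of n] u0[of n]]
    by (simp_all add: power2_eq_square algebra_simps)
  have sdiff: "summable (\<lambda>n. u n * y n - (u n)\<^sup>2)" by (rule summable_diff[OF uy su])
  have sug: "summable (\<lambda>n. u n * gap n)"
    by (rule summable_comparison_test'[OF sdiff]) (use ug in simp)
  have "(\<Sum>n. u n * y n) \<le> sqrt (\<Sum>n. (u n)\<^sup>2) * sqrt (\<Sum>n. (y n)\<^sup>2)"
    using Cauchy_Schwarz_suminf[OF su sy] by linarith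
  also have "\<dots> \<le> sqrt (\<Sum>n. (u n)\<^sup>2) * sqrt (\<Sum>n. (u n)\<^sup>2)"
    using yu suminf_nonneg[OF su] by (intro mult_left_mono) auto
  also have "\<dots> = (\<Sum>n. (u n)\<^sup>2)" using suminf_nonneg[OF su] by simp
  finally have "(\<Sum>n. u n * gap n) \<le> 0"
    using suminf_le[OF ug(2) sug sdiff] suminf_diff[OF uy su] by linarith
  then have "(\<Sum>n. u n * gap n) = 0" using suminf_nonneg[OF sug ug(1)] by linarith
  then show ?thesis using suminf_eq_zero_iff[OF sug ug(1)] by simp
qed

text \<open>Pointwise domination of the resolvent of \<open>J\<^sub>a\<close> by \<open>(-\<Delta>\<^sub>a)\<inverse>\<close>, strict on the diagonal,
  turns an eigenvector \<open>\<psi>\<close> into \<open>u = |V|\<^sup>1\<^sup>/\<^sup>2 |\<psi>|\<close> with \<open>u \<le> K' u - gap\<close>.\<close>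
lemma eigenvector_subsolution:
  assumes f: "\<And>n. f n = Jop (complex_of_real a) \<psi> n - z * \<psi> n"
    and fv: "\<And>n. cmod (f n) = cmod (v n) * cmod (\<psi> n)"
    and k0: "k \<noteq> 0" and k1: "cmod k < 1" and z: "z = k + inverse k"
    and a0: "0 \<le> a" and a1: "a < 1" and \<psi>0: "\<psi> \<longlonglongrightarrow> 0" and sf: "summable (\<lambda>n. cmod (f n))"
  shows "sqrtV v N * cmod (\<psi> N)
    \<le> (\<Sum>n. Kreal a v N n * (sqrtV v n * cmod (\<psi> n)))
       - sqrtV v N * (green a N N - resolvent_bound k a N) * cmod (f N)"
proof -
  let ?r = "resolvent_bound k a"
  let ?g = "\<lambda>n. sqrtV v N * (green a N n - ?r (min N n)) * cmod (f n)"
  note R = norm_le_resolvent_bound_series[OF f k0 k1 z a0 a1 \<psi>0 sf, of N]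
  have K: "Kreal a v N n * (sqrtV v n * cmod (\<psi> n)) = sqrtV v N * green a N n * cmod (f n)" for n
  proof -
    have "Kreal a v N n * (sqrtV v n * cmod (\<psi> n))
        = sqrtV v N * green a N n * ((sqrtV v n * sqrtV v n) * cmod (\<psi> n))"
      by (simp add: Kreal_def algebra_simps)
    then show ?thesis by (simp only: sqrtV_sq(2) fv mult.assoc)
  qed
  have gap: "0 < green a N n - ?r (min N n)" for n
    using resolvent_bound_less_green(2)[OF a0 a1 k0 k1, of "min N n"] by (simp add: green_def)
  have green_min: "green a N n = green a (min N n) (min N n)" for n
    by (simp add: green_def)
  have sK: "summable (\<lambda>n. sqrtV v N * green a N n * cmod (f n))"
    using suminf_min_split(1)[OF sf, of "\<lambda>j. sqrtV v N * green a j j" N] by (simp flip: green_min)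
  have sg: "summable ?g"
    using summable_diff[OF sK summable_mult[OF R(1), of "sqrtV v N"]] by (simp add: algebra_simps)
  have "0 \<le> ?g n" for n using gap[of n] by (simp add: sqrtV_nonneg)
  then have "?g N \<le> (\<Sum>n. ?g n)"
    using sum_le_suminf[OF sg, of "{N}"] by simp
  also have "\<dots> = (\<Sum>n. sqrtV v N * green a N n * cmod (f n) - sqrtV v N * (?r (min N n) * cmod (f n)))"
    by (simp add: algebra_simps)
  also have "\<dots> = (\<Sum>n. sqrtV v N * green a N n * cmod (f n)) - (\<Sum>n. sqrtV v N * (?r (min N n) * cmod (f n)))"
    by (rule suminf_diff[OF sK summable_mult[OF R(1)], symmetric])
  also have "(\<Sum>n. sqrtV v N * (?r (min N n) * cmod (f n))) = sqrtV v N * (\<Sum>n. ?r (min N n) * cmod (f n))"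
    by (rule suminf_mult[OF R(1)])
  finally show ?thesis
    using mult_left_mono[OF R(2) sqrtV_nonneg[of v N]] unfolding K by (simp add: green_def)
qed

lemma eigenvector_potential_term_vanishes:
  assumes K: "real_matrix_contraction (Kreal a v)"
    and f: "\<And>n. f n = Jop (complex_of_real a) \<psi> n - z * \<psi> n"
    and fv: "\<And>n. cmod (f n) = cmod (v n) * cmod (\<psi> n)"
    and k0: "k \<noteq> 0" and k1: "cmod k < 1" and z: "z = k + inverse k"
    and a0: "0 \<le> a" and a1: "a < 1" and \<psi>0: "\<psi> \<longlonglongrightarrow> 0" and B: "\<And>n. cmod (\<psi> n) \<le> B"
    and sv: "summable (\<lambda>n. cmod (v n))" and sf: "summable (\<lambda>n. cmod (f n))"
  shows "f n = 0"
proof -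
  define u where "u n = sqrtV v n * cmod (\<psi> n)" for n
  define y where "y m = (\<Sum>n. Kreal a v m n * u n)" for m
  define gap where "gap n = sqrtV v n * (green a n n - resolvent_bound k a n) * cmod (f n)" for n
  have su: "summable (\<lambda>n. (u n)\<^sup>2)"
    by (rule summable_comparison_test'[OF summable_mult2[OF sv, of "B\<^sup>2"]])
      (simp add: u_def power_mult_distrib sqrtV_sq mult_left_mono power_mono[OF B])
  have "u n * gap n = 0"
  proof (rule l2_subsolution_gap_vanishes)
    show "0 \<le> u n" "0 \<le> gap n" for n
      using resolvent_bound_less_green(2)[OF a0 a1 k0 k1, of n]
      by (simp_all add: u_def gap_def sqrtV_nonneg)
    show "summable (\<lambda>n. (y n)\<^sup>2)" "(\<Sum>n. (y n)\<^sup>2) \<le> (\<Sum>n. (u n)\<^sup>2)"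
      using K su unfolding real_matrix_contraction_def y_def by blast+
    show "u n \<le> y n - gap n" for n
      unfolding u_def y_def gap_def by (rule eigenvector_subsolution[OF f fv k0 k1 z a0 a1 \<psi>0 sf])
  qed (rule su)
  moreover have "u n * gap n
      = (green a n n - resolvent_bound k a n) * ((sqrtV v n * sqrtV v n) * cmod (\<psi> n)) * cmod (f n)"
    by (simp add: u_def gap_def algebra_simps)
  then have "u n * gap n = (green a n n - resolvent_bound k a n) * (cmod (f n))\<^sup>2"
    by (simp only: sqrtV_sq(2) fv[symmetric]) (simp add: power2_eq_square)
  moreover have "0 < green a n n - resolvent_bound k a n"
    using resolvent_bound_less_green(2)[OF a0 a1 k0 k1, of n] by simp
  ultimately show ?thesis by simp
qed

lemma no_eigenvalue_off_interval:
  assumes K: "real_matrix_contraction (Kreal a v)" and a0: "0 \<le> a" and a1: "a < 1"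
    and sv: "summable (\<lambda>n. cmod (v n))"
    and z: "\<And>t. \<bar>t\<bar> \<le> 2 \<Longrightarrow> z \<noteq> complex_of_real t"
  shows "\<not> is_eigenvalue (complex_of_real a) v z"
proof
  assume "is_eigenvalue (complex_of_real a) v z"
  then obtain \<psi> where \<psi>H: "\<psi> \<in> Hdom (complex_of_real a) v" and \<psi>ne: "\<psi> \<noteq> (\<lambda>_. 0)"
    and eig: "Hop (complex_of_real a) v \<psi> = (\<lambda>n. z * \<psi> n)"
    unfolding is_eigenvalue_def by blast
  obtain k where k0: "k \<noteq> 0" and k1: "cmod k < 1" and zk: "z = k + inverse k"
    using Joukowski_preimage[OF z] by blast
  define f where "f n = Jop (complex_of_real a) \<psi> n - z * \<psi> n" for n
  have "f n = - (v n * \<psi> n)" for n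
  proof -
    have "Hop (complex_of_real a) v \<psi> n = z * \<psi> n" using eig by metis
    then show ?thesis unfolding f_def Hop_def by (simp add: algebra_simps)
  qed
  then have fv: "cmod (f n) = cmod (v n) * cmod (\<psi> n)" for n by (simp add: norm_mult)
  have \<psi>0: "\<psi> \<longlonglongrightarrow> 0" using \<psi>H by (simp add: Hdom_def l2_tendsto_zero)
  then have "Bseq \<psi>" by (intro convergent_imp_Bseq convergentI)
  then obtain B where B: "\<And>n. cmod (\<psi> n) \<le> B" by (meson BseqE)
  have sf: "summable (\<lambda>n. cmod (f n))"
    by (rule summable_comparison_test'[OF summable_mult2[OF sv, of B]])
      (simp add: fv mult_left_mono[OF B])
  have "f n = 0" for n
    by (rule eigenvector_potential_term_vanishes[OF K f_def fv k0 k1 zk a0 a1 \<psi>0 B sv sf])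
  then have "\<psi> N = 0" for N
    using norm_le_resolvent_bound_series(2)[OF f_def k0 k1 zk a0 a1 \<psi>0 sf, of N] by simp
  with \<psi>ne show False by auto
qed

theorem theorem5p7:
  fixes a :: real and v :: "nat \<Rightarrow> complex"
  assumes "0 \<le> a" and "a < 1"
  shows "(matrix_op_norm_le (Kmat a v) 1 \<longleftrightarrow> absV_le_negLap (complex_of_real a) v)
       \<and> (matrix_op_norm_le (Kmat a v) 1 \<longrightarrow> discrete_spectrum (complex_of_real a) v = {})"
proof (intro conjI impI)
  show "matrix_op_norm_le (Kmat a v) 1 \<longleftrightarrow> absV_le_negLap (complex_of_real a) v"
    by (rule Kmat_op_norm_le_iff_absV_le_negLap[OF assms(2)])
next
  assume M: "matrix_op_norm_le (Kmat a v) 1"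
  have K: "real_matrix_contraction (Kreal a v)" using M Kmat_op_norm_le_iff[OF assms(2)] by blast
  have sv: "summable (\<lambda>n. cmod (v n))"
    using M Kmat_op_norm_le_iff_absV_le_negLap[OF assms(2)] summable_absV by blast
  then have "(\<lambda>n. cmod (v n)) \<longlonglongrightarrow> 0" by (rule summable_LIMSEQ_zero)
  then have v0: "v \<longlonglongrightarrow> 0" by (simp add: tendsto_norm_zero_iff)
  show "discrete_spectrum (complex_of_real a) v = {}"
  proof (intro equals0I)
    fix z assume "z \<in> discrete_spectrum (complex_of_real a) v"
    then have isolated: "\<not> z islimpt spectrum_H (complex_of_real a) v"
      and eigen: "is_eigenvalue (complex_of_real a) v z"
      unfolding discrete_spectrum_def by auto
    show False
    proof (cases "\<exists>t. \<bar>t\<bar> \<le> 2 \<and> z = complex_of_real t")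
      case True
      then show False using real_interval_islimpt_spectrum_H[OF _ v0] isolated by blast
    next
      case False
      then show False using no_eigenvalue_off_interval[OF K assms sv] eigen by blast
    qed
  qed
qed

end
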